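(* If $\mathbb{C}$ is a regular majority category, then the Pairwise Chinese Remainder Theorem holds in $\mathbb{C}$.
   Context: A category is regular if it has finite limits and coequalizers of kernel pairs and regular epimorphisms are pullback-stable. For $w:S\to W$ and subobject $A$ of $W$, $w\in_S A$ means $w$ factors through a representative of $A$. A ternary relation $R\leqslant X\times Y\times Z$ is majority-selecting if for all $S$ and $x,x':S\to X$, $y,y':S\to Y$, $z,z':S\to Z$: $(x,y,z')\in_S R$, $(x,y',z)\in_S R$, $(x',y,z)\in_S R$ imply $(x,y,z)\in_S R$; a majority category is one in which every ternary relation is majority-selecting. For an equivalence relation $\theta$ on $X$ and $a,b:S\to X$, $a\equiv b\bmod\theta$ means $(a,b)\in_S\theta$. An equivalence relation is effective if it is the kernel pair of some morphism. Given $a_1,\dots,a_m:S\to X$ and equivalence relations $\theta_1,\dots,\theta_m$ on $X$, the system $x\equiv a_i\bmod\theta_i$ ($i=1,\dots,m$) is approximately solvable if there are a regular epimorphism $\alpha:Q\to S$ and a morphism $a:Q\to X$ with $a\equiv a_i\alpha\bmod\theta_i$ for all $i$; it is approximately pairwise solvable if for all $i,j$ the two-equation subsystem for $i,j$ is approximately solvable. The Pairwise Chinese Remainder Theorem holds in $\mathbb{C}$ if for every object $X$, every $m$, all $a_1,\dots,a_m:S\to X$ and all effective equivalence relations $\theta_1,\dots,\theta_m$ on $X$, approximate pairwise solvability implies approximate solvability. *)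

theory Defs
  imports Main
begin

text \<open>Categories given explicitly by objects, arrows, domain, codomain,
identities and composition. Comp g f is g after f (requires Cod f = Dom g).\<close>

record ('o,'a) cat =
  Obj  :: "'o set"
  Arr  :: "'a set"
  Dom  :: "'a \<Rightarrow> 'o"
  Cod  :: "'a \<Rightarrow> 'o"
  Id   :: "'o \<Rightarrow> 'a"
  Comp :: "'a \<Rightarrow> 'a \<Rightarrow> 'a"

definition hom :: "('o,'a) cat \<Rightarrow> 'o \<Rightarrow> 'o \<Rightarrow> 'a set" where
  "hom C A B = {f \<in> Arr C. Dom C f = A \<and> Cod C f = B}"

definition category :: "('o,'a) cat \<Rightarrow> bool" where
  "category C \<longleftrightarrow>
     (\<forall>f\<in>Arr C. Dom C f \<in> Obj C \<and> Cod C f \<in> Obj C) \<and>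
     (\<forall>A\<in>Obj C. Id C A \<in> hom C A A) \<and>
     (\<forall>f\<in>Arr C. \<forall>g\<in>Arr C. Cod C f = Dom C g \<longrightarrow> Comp C g f \<in> hom C (Dom C f) (Cod C g)) \<and>
     (\<forall>f\<in>Arr C. Comp C f (Id C (Dom C f)) = f \<and> Comp C (Id C (Cod C f)) f = f) \<and>
     (\<forall>f\<in>Arr C. \<forall>g\<in>Arr C. \<forall>h\<in>Arr C. Cod C f = Dom C g \<and> Cod C g = Dom C h \<longrightarrow>
        Comp C h (Comp C g f) = Comp C (Comp C h g) f)"

definition is_mono :: "('o,'a) cat \<Rightarrow> 'a \<Rightarrow> bool" where
  "is_mono C m \<longleftrightarrow> m \<in> Arr C \<and>
     (\<forall>g\<in>Arr C. \<forall>h\<in>Arr C. Cod C g = Dom C m \<and> Cod C h = Dom C m \<and> Dom C g = Dom C h \<and>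
        Comp C m g = Comp C m h \<longrightarrow> g = h)"

definition iso :: "('o,'a) cat \<Rightarrow> 'a \<Rightarrow> bool" where
  "iso C f \<longleftrightarrow> f \<in> Arr C \<and>
     (\<exists>g\<in>hom C (Cod C f) (Dom C f). Comp C g f = Id C (Dom C f) \<and> Comp C f g = Id C (Cod C f))"

definition is_pullback :: "('o,'a) cat \<Rightarrow> 'a \<Rightarrow> 'a \<Rightarrow> 'a \<Rightarrow> 'a \<Rightarrow> bool" where
  "is_pullback C f g p q \<longleftrightarrow>
     f \<in> Arr C \<and> g \<in> Arr C \<and> p \<in> Arr C \<and> q \<in> Arr C \<and>
     Cod C f = Cod C g \<and> Dom C p = Dom C q \<and> Cod C p = Dom C f \<and> Cod C q = Dom C g \<and>
     Comp C f p = Comp C g q \<and>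
     (\<forall>u\<in>Arr C. \<forall>v\<in>Arr C. Dom C u = Dom C v \<and> Cod C u = Dom C f \<and> Cod C v = Dom C g \<and>
        Comp C f u = Comp C g v \<longrightarrow>
        (\<exists>!h. h \<in> hom C (Dom C u) (Dom C p) \<and> Comp C p h = u \<and> Comp C q h = v))"

definition terminal :: "('o,'a) cat \<Rightarrow> 'o \<Rightarrow> bool" where
  "terminal C T \<longleftrightarrow> T \<in> Obj C \<and> (\<forall>A\<in>Obj C. \<exists>!f. f \<in> hom C A T)"

text \<open>Finite limits: a terminal object and all pullbacks (standard equivalent
formulation of finite completeness).\<close>
definition has_finite_limits :: "('o,'a) cat \<Rightarrow> bool" where
  "has_finite_limits C \<longleftrightarrow> (\<exists>T. terminal C T) \<and>
     (\<forall>f\<in>Arr C. \<forall>g\<in>Arr C. Cod C f = Cod C g \<longrightarrow> (\<exists>p q. is_pullback C f g p q))"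

definition is_coequalizer :: "('o,'a) cat \<Rightarrow> 'a \<Rightarrow> 'a \<Rightarrow> 'a \<Rightarrow> bool" where
  "is_coequalizer C p q e \<longleftrightarrow>
     p \<in> Arr C \<and> q \<in> Arr C \<and> e \<in> Arr C \<and>
     Dom C p = Dom C q \<and> Cod C p = Cod C q \<and> Dom C e = Cod C p \<and>
     Comp C e p = Comp C e q \<and>
     (\<forall>u\<in>Arr C. Dom C u = Cod C p \<and> Comp C u p = Comp C u q \<longrightarrow>
        (\<exists>!h. h \<in> hom C (Cod C e) (Cod C u) \<and> Comp C h e = u))"

definition regular_epi :: "('o,'a) cat \<Rightarrow> 'a \<Rightarrow> bool" where
  "regular_epi C e \<longleftrightarrow> (\<exists>p q. is_coequalizer C p q e)"

definition kernel_pair :: "('o,'a) cat \<Rightarrow> 'a \<Rightarrow> 'a \<Rightarrow> 'a \<Rightarrow> bool" where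
  "kernel_pair C f p q \<longleftrightarrow> is_pullback C f f p q"

definition regular_category :: "('o,'a) cat \<Rightarrow> bool" where
  "regular_category C \<longleftrightarrow> category C \<and> has_finite_limits C \<and>
     (\<forall>f p q. kernel_pair C f p q \<longrightarrow> (\<exists>e. is_coequalizer C p q e)) \<and>
     (\<forall>e g p q. regular_epi C e \<and> is_pullback C e g p q \<longrightarrow> regular_epi C q)"

definition is_product2 :: "('o,'a) cat \<Rightarrow> 'o \<Rightarrow> 'o \<Rightarrow> 'a \<Rightarrow> 'a \<Rightarrow> bool" where
  "is_product2 C X Y p1 p2 \<longleftrightarrow>
     p1 \<in> Arr C \<and> p2 \<in> Arr C \<and> Dom C p1 = Dom C p2 \<and> Cod C p1 = X \<and> Cod C p2 = Y \<and>
     (\<forall>x\<in>Arr C. \<forall>y\<in>Arr C. Dom C x = Dom C y \<and> Cod C x = X \<and> Cod C y = Y \<longrightarrow>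
        (\<exists>!h. h \<in> hom C (Dom C x) (Dom C p1) \<and> Comp C p1 h = x \<and> Comp C p2 h = y))"

definition is_product3 :: "('o,'a) cat \<Rightarrow> 'o \<Rightarrow> 'o \<Rightarrow> 'o \<Rightarrow> 'a \<Rightarrow> 'a \<Rightarrow> 'a \<Rightarrow> bool" where
  "is_product3 C X Y Z p1 p2 p3 \<longleftrightarrow>
     p1 \<in> Arr C \<and> p2 \<in> Arr C \<and> p3 \<in> Arr C \<and> Dom C p1 = Dom C p2 \<and> Dom C p1 = Dom C p3 \<and>
     Cod C p1 = X \<and> Cod C p2 = Y \<and> Cod C p3 = Z \<and>
     (\<forall>x\<in>Arr C. \<forall>y\<in>Arr C. \<forall>z\<in>Arr C. Dom C x = Dom C y \<and> Dom C x = Dom C z \<and>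
        Cod C x = X \<and> Cod C y = Y \<and> Cod C z = Z \<longrightarrow>
        (\<exists>!h. h \<in> hom C (Dom C x) (Dom C p1) \<and> Comp C p1 h = x \<and> Comp C p2 h = y \<and> Comp C p3 h = z))"

definition tuple2 :: "('o,'a) cat \<Rightarrow> 'a \<Rightarrow> 'a \<Rightarrow> 'a \<Rightarrow> 'a \<Rightarrow> 'a" where
  "tuple2 C p1 p2 x y = (THE h. h \<in> hom C (Dom C x) (Dom C p1) \<and> Comp C p1 h = x \<and> Comp C p2 h = y)"

definition tuple3 :: "('o,'a) cat \<Rightarrow> 'a \<Rightarrow> 'a \<Rightarrow> 'a \<Rightarrow> 'a \<Rightarrow> 'a \<Rightarrow> 'a \<Rightarrow> 'a" where
  "tuple3 C p1 p2 p3 x y z =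
     (THE h. h \<in> hom C (Dom C x) (Dom C p1) \<and> Comp C p1 h = x \<and> Comp C p2 h = y \<and> Comp C p3 h = z)"

text \<open>w \<in>_S A : w factors through the mono r representing the subobject A.\<close>
definition gmem :: "('o,'a) cat \<Rightarrow> 'a \<Rightarrow> 'a \<Rightarrow> bool" where
  "gmem C w r \<longleftrightarrow> (\<exists>s\<in>hom C (Dom C w) (Dom C r). Comp C r s = w)"

text \<open>A ternary relation R \<le> X \<times> Y \<times> Z is given by a product (p1,p2,p3) of X, Y, Z
and a mono r into the product object.\<close>
definition majority_selecting ::
  "('o,'a) cat \<Rightarrow> 'o \<Rightarrow> 'o \<Rightarrow> 'o \<Rightarrow> 'a \<Rightarrow> 'a \<Rightarrow> 'a \<Rightarrow> 'a \<Rightarrow> bool" where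
  "majority_selecting C X Y Z p1 p2 p3 r \<longleftrightarrow>
     (\<forall>S\<in>Obj C. \<forall>x\<in>hom C S X. \<forall>x'\<in>hom C S X. \<forall>y\<in>hom C S Y. \<forall>y'\<in>hom C S Y.
        \<forall>z\<in>hom C S Z. \<forall>z'\<in>hom C S Z.
        gmem C (tuple3 C p1 p2 p3 x y z') r \<and>
        gmem C (tuple3 C p1 p2 p3 x y' z) r \<and>
        gmem C (tuple3 C p1 p2 p3 x' y z) r \<longrightarrow>
        gmem C (tuple3 C p1 p2 p3 x y z) r)"

definition majority_category :: "('o,'a) cat \<Rightarrow> bool" where
  "majority_category C \<longleftrightarrow>
     (\<forall>X\<in>Obj C. \<forall>Y\<in>Obj C. \<forall>Z\<in>Obj C. \<forall>p1 p2 p3 r.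
        is_product3 C X Y Z p1 p2 p3 \<and> is_mono C r \<and> Cod C r = Dom C p1 \<longrightarrow>
        majority_selecting C X Y Z p1 p2 p3 r)"

text \<open>A binary relation on X is a triple (q1, q2, t): a product q1, q2 of X with
itself and a mono t into the product object.
a \<equiv> b mod \<theta> means (a, b) \<in>_S \<theta>.\<close>
definition congr :: "('o,'a) cat \<Rightarrow> 'a \<times> 'a \<times> 'a \<Rightarrow> 'a \<Rightarrow> 'a \<Rightarrow> bool" where
  "congr C th a b = (case th of (q1, q2, t) \<Rightarrow> gmem C (tuple2 C q1 q2 a b) t)"

definition equivalence_relation :: "('o,'a) cat \<Rightarrow> 'o \<Rightarrow> 'a \<times> 'a \<times> 'a \<Rightarrow> bool" where
  "equivalence_relation C X th \<longleftrightarrow>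
     (case th of (q1, q2, t) \<Rightarrow>
        is_product2 C X X q1 q2 \<and> is_mono C t \<and> Cod C t = Dom C q1) \<and>
     (\<forall>S\<in>Obj C.
        (\<forall>a\<in>hom C S X. congr C th a a) \<and>
        (\<forall>a\<in>hom C S X. \<forall>b\<in>hom C S X. congr C th a b \<longrightarrow> congr C th b a) \<and>
        (\<forall>a\<in>hom C S X. \<forall>b\<in>hom C S X. \<forall>c\<in>hom C S X.
            congr C th a b \<and> congr C th b c \<longrightarrow> congr C th a c))"

definition effective :: "('o,'a) cat \<Rightarrow> 'o \<Rightarrow> 'a \<times> 'a \<times> 'a \<Rightarrow> bool" where
  "effective C X th \<longleftrightarrow>
     (case th of (q1, q2, t) \<Rightarrow>
        (\<exists>f p k. Dom C f = X \<and> kernel_pair C f p k \<and>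
           (\<exists>i. iso C i \<and> i \<in> hom C (Dom C p) (Dom C t) \<and>
                Comp C q1 (Comp C t i) = p \<and> Comp C q2 (Comp C t i) = k)))"

definition approx_solvable ::
  "('o,'a) cat \<Rightarrow> 'o \<Rightarrow> 'o \<Rightarrow> nat set \<Rightarrow> (nat \<Rightarrow> 'a) \<Rightarrow> (nat \<Rightarrow> 'a \<times> 'a \<times> 'a) \<Rightarrow> bool" where
  "approx_solvable C X S I a th \<longleftrightarrow>
     (\<exists>Q \<alpha> b. regular_epi C \<alpha> \<and> \<alpha> \<in> hom C Q S \<and> b \<in> hom C Q X \<and>
        (\<forall>i\<in>I. congr C (th i) b (Comp C (a i) \<alpha>)))"

definition approx_pairwise_solvable ::
  "('o,'a) cat \<Rightarrow> 'o \<Rightarrow> 'o \<Rightarrow> nat set \<Rightarrow> (nat \<Rightarrow> 'a) \<Rightarrow> (nat \<Rightarrow> 'a \<times> 'a \<times> 'a) \<Rightarrow> bool" where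
  "approx_pairwise_solvable C X S I a th \<longleftrightarrow>
     (\<forall>i\<in>I. \<forall>j\<in>I. approx_solvable C X S {i, j} a th)"

definition pairwise_CRT :: "('o,'a) cat \<Rightarrow> bool" where
  "pairwise_CRT C \<longleftrightarrow>
     (\<forall>X\<in>Obj C. \<forall>S\<in>Obj C. \<forall>m::nat. \<forall>a th.
        1 \<le> m \<and>
        (\<forall>i<m. a i \<in> hom C S X \<and> equivalence_relation C X (th i) \<and> effective C X (th i)) \<and>
        approx_pairwise_solvable C X S {..<m} a th \<longrightarrow>
        approx_solvable C X S {..<m} a th)"

end

(*
  Effective equivalence relations are kernel pairs, so x = a i mod theta i becomes the
  equation f i x = c i with c i = f i (a i), to be solved on a regular-epi cover of S.
  Regular epis compose and are stable under pullback, so finitely many covers have a common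
  refinement.
  Given solutions of three equations taken two at a time, the triple (c i, c j, c k) agrees in
  two coordinates with each of three generalised elements of the image of
  <f i, f j, f k> : X -> Y i * Y j * Y k. That image is a ternary relation, hence
  majority-selecting, so the triple lies in it as well and lifts along a cover to a common
  solution. Merging two equations into one with values in Y i * Y j lowers the number of
  equations while keeping pairwise solvability (a pair containing the merged equation is a
  triple of the old system), and induction concludes.
*)
theory Submission
  imports Defs
begin

locale regular_cat =
  fixes C :: "('o,'a) cat"
  assumes regular: "regular_category C"
begin

abbreviation comp (infixr "\<cdot>" 55) where "g \<cdot> f \<equiv> Comp C g f"

lemma category: "category C"
  using regular unfolding regular_category_def by simp

lemma pullback_exists: "f \<in> Arr C \<Longrightarrow> g \<in> Arr C \<Longrightarrow> Cod C f = Cod C g \<Longrightarrow> \<exists>p q. is_pullback C f g p q"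
  using regular unfolding regular_category_def has_finite_limits_def by blast

lemma terminal_exists: "\<exists>T. terminal C T"
  using regular unfolding regular_category_def has_finite_limits_def by blast

lemma kernel_pair_coequalizer: "kernel_pair C f p q \<Longrightarrow> \<exists>e. is_coequalizer C p q e"
  using regular unfolding regular_category_def by blast

lemma regular_epi_pullback: "regular_epi C e \<Longrightarrow> is_pullback C e g p q \<Longrightarrow> regular_epi C q"
  using regular unfolding regular_category_def by blast

lemma in_hom_iff: "f \<in> hom C A B \<longleftrightarrow> f \<in> Arr C \<and> Dom C f = A \<and> Cod C f = B"
  unfolding hom_def by simp

lemma dom_in_Obj: "f \<in> Arr C \<Longrightarrow> Dom C f \<in> Obj C"
  using category unfolding category_def by blast

lemma cod_in_Obj: "f \<in> Arr C \<Longrightarrow> Cod C f \<in> Obj C"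
  using category unfolding category_def by blast

lemma Id_in_hom: "A \<in> Obj C \<Longrightarrow> Id C A \<in> hom C A A"
  using category unfolding category_def by blast

lemma Id_arr [simp]: "A \<in> Obj C \<Longrightarrow> Id C A \<in> Arr C"
  and Dom_Id [simp]: "A \<in> Obj C \<Longrightarrow> Dom C (Id C A) = A"
  and Cod_Id [simp]: "A \<in> Obj C \<Longrightarrow> Cod C (Id C A) = A"
  using Id_in_hom unfolding hom_def by blast+

lemma comp_in_hom: "f \<in> Arr C \<Longrightarrow> g \<in> Arr C \<Longrightarrow> Cod C f = Dom C g \<Longrightarrow> g \<cdot> f \<in> hom C (Dom C f) (Cod C g)"
  using category unfolding category_def by blast

lemma comp_arr [simp]: "f \<in> Arr C \<Longrightarrow> g \<in> Arr C \<Longrightarrow> Cod C f = Dom C g \<Longrightarrow> g \<cdot> f \<in> Arr C"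
  and Dom_comp [simp]: "f \<in> Arr C \<Longrightarrow> g \<in> Arr C \<Longrightarrow> Cod C f = Dom C g \<Longrightarrow> Dom C (g \<cdot> f) = Dom C f"
  and Cod_comp [simp]: "f \<in> Arr C \<Longrightarrow> g \<in> Arr C \<Longrightarrow> Cod C f = Dom C g \<Longrightarrow> Cod C (g \<cdot> f) = Cod C g"
  using comp_in_hom unfolding hom_def by blast+

lemma comp_Id_left [simp]: "f \<in> Arr C \<Longrightarrow> Id C (Cod C f) \<cdot> f = f"
  using category unfolding category_def by blast

lemma comp_assoc [simp]:
  "f \<in> Arr C \<Longrightarrow> g \<in> Arr C \<Longrightarrow> h \<in> Arr C \<Longrightarrow> Cod C f = Dom C g \<Longrightarrow> Cod C g = Dom C h
   \<Longrightarrow> (h \<cdot> g) \<cdot> f = h \<cdot> (g \<cdot> f)"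
  using category unfolding category_def by metis

lemma comp_reassoc:
  "a \<cdot> b = c \<Longrightarrow> a \<in> Arr C \<Longrightarrow> b \<in> Arr C \<Longrightarrow> x \<in> Arr C \<Longrightarrow> Cod C b = Dom C a
   \<Longrightarrow> Cod C x = Dom C b \<Longrightarrow> a \<cdot> (b \<cdot> x) = c \<cdot> x"
  by (metis comp_assoc)

lemma comp_eq_whisker:
  "a \<cdot> b = c \<cdot> d \<Longrightarrow> a \<in> Arr C \<Longrightarrow> b \<in> Arr C \<Longrightarrow> c \<in> Arr C \<Longrightarrow> d \<in> Arr C \<Longrightarrow> x \<in> Arr C
   \<Longrightarrow> Cod C b = Dom C a \<Longrightarrow> Cod C d = Dom C c \<Longrightarrow> Cod C x = Dom C b \<Longrightarrow> Cod C x = Dom C d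
   \<Longrightarrow> a \<cdot> (b \<cdot> x) = c \<cdot> (d \<cdot> x)"
  by (metis comp_assoc)

lemma mono_arr: "is_mono C m \<Longrightarrow> m \<in> Arr C"
  unfolding is_mono_def by blast

lemma monoD:
  "is_mono C m \<Longrightarrow> g \<in> Arr C \<Longrightarrow> h \<in> Arr C \<Longrightarrow> Cod C g = Dom C m \<Longrightarrow> Cod C h = Dom C m
   \<Longrightarrow> Dom C g = Dom C h \<Longrightarrow> m \<cdot> g = m \<cdot> h \<Longrightarrow> g = h"
  unfolding is_mono_def by blast

definition epi :: "'a \<Rightarrow> bool" where
  "epi e \<longleftrightarrow> e \<in> Arr C \<and> (\<forall>g\<in>Arr C. \<forall>h\<in>Arr C. Dom C g = Cod C e \<and> Dom C h = Cod C e \<and>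
      Cod C g = Cod C h \<and> g \<cdot> e = h \<cdot> e \<longrightarrow> g = h)"

lemma epiD:
  "epi e \<Longrightarrow> g \<in> Arr C \<Longrightarrow> h \<in> Arr C \<Longrightarrow> Dom C g = Cod C e \<Longrightarrow> Dom C h = Cod C e
   \<Longrightarrow> Cod C g = Cod C h \<Longrightarrow> g \<cdot> e = h \<cdot> e \<Longrightarrow> g = h"
  unfolding epi_def by blast

lemma epi_comp:
  assumes "epi e1" "epi e2" "Cod C e1 = Dom C e2"
  shows "epi (e2 \<cdot> e1)"
proof -
  have e: "e1 \<in> Arr C" "e2 \<in> Arr C" using assms unfolding epi_def by auto
  show ?thesis unfolding epi_def
  proof (intro conjI ballI impI)
    show "e2 \<cdot> e1 \<in> Arr C" using e assms by simp
    fix g h assume g: "g \<in> Arr C" and h: "h \<in> Arr C" and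
      H: "Dom C g = Cod C (e2 \<cdot> e1) \<and> Dom C h = Cod C (e2 \<cdot> e1) \<and> Cod C g = Cod C h \<and>
          g \<cdot> (e2 \<cdot> e1) = h \<cdot> (e2 \<cdot> e1)"
    have dom: "Dom C g = Cod C e2" "Dom C h = Cod C e2" "Cod C g = Cod C h" using H e assms by auto
    have "(g \<cdot> e2) \<cdot> e1 = (h \<cdot> e2) \<cdot> e1" using H e assms g h dom by simp
    then have "g \<cdot> e2 = h \<cdot> e2" using epiD[OF assms(1)] e assms g h dom by simp
    then show "g = h" using epiD[OF assms(2)] e g h dom by simp
  qed
qed

lemma is_coequalizerD:
  assumes "is_coequalizer C p q e"
  shows "p \<in> Arr C" "q \<in> Arr C" "e \<in> Arr C" "Dom C p = Dom C q" "Cod C p = Cod C q"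
    "Dom C e = Cod C p" "e \<cdot> p = e \<cdot> q"
  using assms unfolding is_coequalizer_def by auto

lemma coequalizer_universal:
  assumes "is_coequalizer C p q e" "u \<in> Arr C" "Dom C u = Cod C p" "u \<cdot> p = u \<cdot> q"
  shows "\<exists>!h. h \<in> hom C (Cod C e) (Cod C u) \<and> h \<cdot> e = u"
  using assms unfolding is_coequalizer_def by blast

lemma coequalizer_epi:
  assumes coeq: "is_coequalizer C p q e"
  shows "epi e"
  unfolding epi_def
proof (intro conjI is_coequalizerD(3)[OF coeq] ballI impI)
  note e = is_coequalizerD[OF coeq]
  fix g h assume g: "g \<in> Arr C" and h: "h \<in> Arr C" and
    H: "Dom C g = Cod C e \<and> Dom C h = Cod C e \<and> Cod C g = Cod C h \<and> g \<cdot> e = h \<cdot> e"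
  have ge: "Dom C g = Cod C e" using H by blast
  have "(g \<cdot> e) \<cdot> p = (g \<cdot> e) \<cdot> q" using e g ge by simp
  then have "\<exists>!k. k \<in> hom C (Cod C e) (Cod C g) \<and> k \<cdot> e = g \<cdot> e"
    using coequalizer_universal[OF coeq, of "g \<cdot> e"] e g ge by simp
  moreover have "g \<in> hom C (Cod C e) (Cod C g)" "h \<in> hom C (Cod C e) (Cod C g)"
    using g h H by (auto simp: in_hom_iff)
  ultimately show "g = h" using H by metis
qed

lemma regular_epi_epi: "regular_epi C e \<Longrightarrow> epi e"
  unfolding regular_epi_def using coequalizer_epi by blast

lemma regular_epi_arr: "regular_epi C e \<Longrightarrow> e \<in> Arr C"
  unfolding regular_epi_def is_coequalizer_def by blast

lemma is_pullbackD:
  assumes "is_pullback C f g p q"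
  shows "f \<in> Arr C" "g \<in> Arr C" "p \<in> Arr C" "q \<in> Arr C" "Cod C f = Cod C g" "Dom C p = Dom C q"
    "Cod C p = Dom C f" "Cod C q = Dom C g" "f \<cdot> p = g \<cdot> q"
  using assms unfolding is_pullback_def by auto

lemma pullback_universal:
  assumes "is_pullback C f g p q" "u \<in> Arr C" "v \<in> Arr C" "Dom C u = Dom C v"
    "Cod C u = Dom C f" "Cod C v = Dom C g" "f \<cdot> u = g \<cdot> v"
  shows "\<exists>!h. h \<in> hom C (Dom C u) (Dom C p) \<and> p \<cdot> h = u \<and> q \<cdot> h = v"
  using assms unfolding is_pullback_def by blast

lemma regular_epi_lift:
  assumes "regular_epi C e" "s \<in> Arr C" "Cod C s = Cod C e"
  obtains u v where "regular_epi C v" "u \<in> hom C (Dom C v) (Dom C e)"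
    "v \<in> hom C (Dom C v) (Dom C s)" "e \<cdot> u = s \<cdot> v"
proof -
  obtain u v where pb: "is_pullback C e s u v"
    using pullback_exists[OF regular_epi_arr[OF assms(1)] assms(2) assms(3)[symmetric]] by blast
  note pb' = is_pullbackD[OF pb]
  show ?thesis
    by (rule that[OF regular_epi_pullback[OF assms(1) pb]]) (use pb' in \<open>auto simp: in_hom_iff\<close>)
qed

lemma regular_epi_lift_pair:
  assumes e: "regular_epi C e" and g: "g \<in> Arr C" "Cod C g = Cod C e"
    and h: "h \<in> Arr C" "Cod C h = Cod C e" "Dom C h = Dom C g"
  obtains w u1 u2 where "epi w" "w \<in> hom C (Dom C w) (Dom C g)"
    "u1 \<in> hom C (Dom C w) (Dom C e)" "u2 \<in> hom C (Dom C w) (Dom C e)"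
    "e \<cdot> u1 = g \<cdot> w" "e \<cdot> u2 = h \<cdot> w"
proof -
  obtain u1 v1 where 1: "regular_epi C v1" "u1 \<in> hom C (Dom C v1) (Dom C e)"
    "v1 \<in> hom C (Dom C v1) (Dom C g)" "e \<cdot> u1 = g \<cdot> v1"
    using regular_epi_lift[OF e g] .
  have hv1: "h \<cdot> v1 \<in> Arr C" "Cod C (h \<cdot> v1) = Cod C e" using 1 h by (auto simp: in_hom_iff)
  obtain u2 v2 where 2: "regular_epi C v2" "u2 \<in> hom C (Dom C v2) (Dom C e)"
    "v2 \<in> hom C (Dom C v2) (Dom C (h \<cdot> v1))" "e \<cdot> u2 = (h \<cdot> v1) \<cdot> v2"
    using regular_epi_lift[OF e hv1] .
  have a: "u1 \<in> Arr C" "v1 \<in> Arr C" "v2 \<in> Arr C" "Cod C v1 = Dom C g" "Cod C v2 = Dom C v1"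
    "Dom C u1 = Dom C v1" "Cod C u1 = Dom C e" using 1 2 h by (auto simp: in_hom_iff)
  show ?thesis
  proof (rule that)
    show "epi (v1 \<cdot> v2)" using epi_comp[OF regular_epi_epi[OF 2(1)] regular_epi_epi[OF 1(1)]] a by simp
    show "v1 \<cdot> v2 \<in> hom C (Dom C (v1 \<cdot> v2)) (Dom C g)" using a by (simp add: in_hom_iff)
    show "u1 \<cdot> v2 \<in> hom C (Dom C (v1 \<cdot> v2)) (Dom C e)" using a by (simp add: in_hom_iff)
    show "u2 \<in> hom C (Dom C (v1 \<cdot> v2)) (Dom C e)" using 2 a h by (simp add: in_hom_iff)
    show "e \<cdot> (u1 \<cdot> v2) = g \<cdot> (v1 \<cdot> v2)"
      using comp_eq_whisker[OF 1(4)] a g regular_epi_arr[OF e] by simp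
    show "e \<cdot> u2 = h \<cdot> (v1 \<cdot> v2)" using 2(4) a h by simp
  qed
qed

text \<open>Two arrows equalised by \<open>m\<close> become, after a common cover, a pair factoring through the
  kernel pair of \<open>f\<close>, which \<open>e\<close> coequalises.\<close>
lemma kernel_pair_coequalizer_factor_mono:
  assumes kp: "is_pullback C f f p q" and coeq: "is_coequalizer C p q e"
    and m: "m \<in> hom C (Cod C e) (Cod C f)" "m \<cdot> e = f"
  shows "is_mono C m"
  unfolding is_mono_def
proof (intro conjI ballI impI)
  note e = is_coequalizerD[OF coeq] and k = is_pullbackD[OF kp]
  show ma: "m \<in> Arr C" using m by (simp add: in_hom_iff)
  have dm: "Dom C m = Cod C e" using m by (simp add: in_hom_iff)
  fix g h assume g: "g \<in> Arr C" and h: "h \<in> Arr C" and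
    H: "Cod C g = Dom C m \<and> Cod C h = Dom C m \<and> Dom C g = Dom C h \<and> m \<cdot> g = m \<cdot> h"
  have gh: "Cod C g = Cod C e" "Cod C h = Cod C e" "Dom C h = Dom C g" using H dm by auto
  have mgh: "m \<cdot> g = m \<cdot> h" using H by blast
  have re: "regular_epi C e" using coeq unfolding regular_epi_def by blast
  obtain w u1 u2 where w: "epi w" "w \<in> hom C (Dom C w) (Dom C g)"
    "u1 \<in> hom C (Dom C w) (Dom C e)" "u2 \<in> hom C (Dom C w) (Dom C e)"
    and wg: "e \<cdot> u1 = g \<cdot> w" and wh: "e \<cdot> u2 = h \<cdot> w"
    using regular_epi_lift_pair[OF re g gh(1) h gh(2,3)] .
  have a: "w \<in> Arr C" "u1 \<in> Arr C" "u2 \<in> Arr C" "Cod C w = Dom C g" "Cod C u1 = Dom C e"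
    "Cod C u2 = Dom C e" "Dom C u1 = Dom C w" "Dom C u2 = Dom C w" using w by (auto simp: in_hom_iff)
  have "f \<cdot> u1 = m \<cdot> (e \<cdot> u1)" using comp_reassoc[OF m(2), of u1] ma dm e a by simp
  also have "\<dots> = m \<cdot> (g \<cdot> w)" by (simp only: wg)
  also have "\<dots> = m \<cdot> (h \<cdot> w)" using comp_eq_whisker[OF mgh] ma g h gh dm a by simp
  also have "\<dots> = m \<cdot> (e \<cdot> u2)" by (simp only: wh)
  also have "\<dots> = f \<cdot> u2" using comp_reassoc[OF m(2), of u2] ma dm e a by simp
  finally have fu: "f \<cdot> u1 = f \<cdot> u2" .
  have u12: "Dom C u1 = Dom C u2" "Cod C u1 = Dom C f" "Cod C u2 = Dom C f"
    using a e(6) k(7) by simp_all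
  obtain s where s: "s \<in> hom C (Dom C u1) (Dom C p)" "p \<cdot> s = u1" "q \<cdot> s = u2"
    using pullback_universal[OF kp a(2,3) u12 fu] by blast
  have sa: "s \<in> Arr C" "Cod C s = Dom C p" using s by (auto simp: in_hom_iff)
  have "g \<cdot> w = e \<cdot> (p \<cdot> s)" by (simp only: wg s(2))
  also have "\<dots> = e \<cdot> (q \<cdot> s)"
    by (rule comp_eq_whisker[OF e(7) e(3) e(1) e(3) e(2) sa(1)]) (use e(4-6) sa(2) in simp_all)
  also have "\<dots> = h \<cdot> w" by (simp only: wh s(3))
  finally have "g \<cdot> w = h \<cdot> w" .
  then show "g = h" by (rule epiD[OF w(1) g h, rotated 3]) (use a(4) gh in simp_all)
qed

lemma image_factorization:
  assumes f: "f \<in> Arr C"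
  obtains p q e m where "kernel_pair C f p q" "is_coequalizer C p q e" "is_mono C m"
    "Cod C e = Dom C m" "m \<cdot> e = f"
proof -
  obtain p q where kp: "is_pullback C f f p q" using pullback_exists[OF f f] by blast
  obtain e where coeq: "is_coequalizer C p q e"
    using kernel_pair_coequalizer kp unfolding kernel_pair_def by blast
  note e = is_coequalizerD[OF coeq] and k = is_pullbackD[OF kp]
  obtain m where m: "m \<in> hom C (Cod C e) (Cod C f)" "m \<cdot> e = f"
    using coequalizer_universal[OF coeq f] k by auto
  have "Dom C m = Cod C e" using m by (simp add: in_hom_iff)
  then show ?thesis
    using that[OF kp[folded kernel_pair_def] coeq kernel_pair_coequalizer_factor_mono[OF kp coeq m]] m(2)
    by simp
qed

definition strong_epi :: "'a \<Rightarrow> bool" where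
  "strong_epi e \<longleftrightarrow> epi e \<and> (\<forall>m u v. is_mono C m \<and> u \<in> Arr C \<and> v \<in> Arr C \<and> Dom C u = Dom C e \<and>
     Cod C u = Dom C m \<and> Dom C v = Cod C e \<and> Cod C v = Cod C m \<and> m \<cdot> u = v \<cdot> e \<longrightarrow>
     (\<exists>d. d \<in> hom C (Cod C e) (Dom C m) \<and> d \<cdot> e = u \<and> m \<cdot> d = v))"

lemma strong_epiD:
  assumes "strong_epi e" "is_mono C m" "u \<in> Arr C" "v \<in> Arr C" "Dom C u = Dom C e"
    "Cod C u = Dom C m" "Dom C v = Cod C e" "Cod C v = Cod C m" "m \<cdot> u = v \<cdot> e"
  shows "\<exists>d. d \<in> hom C (Cod C e) (Dom C m) \<and> d \<cdot> e = u \<and> m \<cdot> d = v"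
  using assms unfolding strong_epi_def by blast

lemma regular_epi_strong_epi:
  assumes "regular_epi C e"
  shows "strong_epi e"
proof -
  obtain p q where coeq: "is_coequalizer C p q e" using assms unfolding regular_epi_def by blast
  note e = is_coequalizerD[OF coeq]
  have epi: "epi e" using coequalizer_epi[OF coeq] .
  show ?thesis unfolding strong_epi_def
  proof (intro conjI epi allI impI)
    fix m u v assume H: "is_mono C m \<and> u \<in> Arr C \<and> v \<in> Arr C \<and> Dom C u = Dom C e \<and>
      Cod C u = Dom C m \<and> Dom C v = Cod C e \<and> Cod C v = Cod C m \<and> m \<cdot> u = v \<cdot> e"
    have m: "m \<in> Arr C" using H mono_arr by blast
    have u: "u \<in> Arr C" "v \<in> Arr C" "Dom C u = Dom C e" "Cod C u = Dom C m" "Dom C v = Cod C e"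
      "Cod C v = Cod C m" and muv: "m \<cdot> u = v \<cdot> e" using H by auto
    have "m \<cdot> (u \<cdot> p) = (m \<cdot> u) \<cdot> p" using u e m by simp
    also have "\<dots> = v \<cdot> (e \<cdot> p)" using u muv e m by simp
    also have "\<dots> = v \<cdot> (e \<cdot> q)" using e by simp
    also have "\<dots> = (m \<cdot> u) \<cdot> q" using u muv e m by simp
    also have "\<dots> = m \<cdot> (u \<cdot> q)" using u e m by simp
    finally have "u \<cdot> p = u \<cdot> q" using monoD[of m "u \<cdot> p" "u \<cdot> q"] H u e by simp
    then obtain d where d: "d \<in> hom C (Cod C e) (Cod C u)" "d \<cdot> e = u"
      using coequalizer_universal[OF coeq u(1)] u e by auto
    have "(m \<cdot> d) \<cdot> e = v \<cdot> e" using d u muv m e by (simp add: in_hom_iff)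
    then have "m \<cdot> d = v" using epiD[OF epi, of "m \<cdot> d" v] d u m e by (simp add: in_hom_iff)
    then show "\<exists>d. d \<in> hom C (Cod C e) (Dom C m) \<and> d \<cdot> e = u \<and> m \<cdot> d = v" using d u by auto
  qed
qed

lemma strong_epi_comp:
  assumes "strong_epi e1" "strong_epi e2" "Cod C e1 = Dom C e2"
  shows "strong_epi (e2 \<cdot> e1)"
proof -
  have epis: "epi e1" "epi e2" using assms unfolding strong_epi_def by auto
  have a: "e1 \<in> Arr C" "e2 \<in> Arr C" using epis unfolding epi_def by auto
  show ?thesis unfolding strong_epi_def
  proof (intro conjI epi_comp[OF epis assms(3)] allI impI)
    fix m u v assume H: "is_mono C m \<and> u \<in> Arr C \<and> v \<in> Arr C \<and> Dom C u = Dom C (e2 \<cdot> e1) \<and>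
      Cod C u = Dom C m \<and> Dom C v = Cod C (e2 \<cdot> e1) \<and> Cod C v = Cod C m \<and> m \<cdot> u = v \<cdot> (e2 \<cdot> e1)"
    have m: "m \<in> Arr C" "is_mono C m" using H mono_arr by blast+
    have u: "u \<in> Arr C" "Dom C u = Dom C e1" "Cod C u = Dom C m"
      and v: "v \<in> Arr C" "Dom C v = Cod C e2" "Cod C v = Cod C m" using H a assms by auto
    have "m \<cdot> u = (v \<cdot> e2) \<cdot> e1" using H a assms v by simp
    then obtain d1 where d1: "d1 \<in> hom C (Cod C e1) (Dom C m)" "d1 \<cdot> e1 = u" "m \<cdot> d1 = v \<cdot> e2"
      using strong_epiD[OF assms(1) m(2) u(1), of "v \<cdot> e2"] u v a assms by (simp; blast)
    then obtain d2 where d2: "d2 \<in> hom C (Cod C e2) (Dom C m)" "d2 \<cdot> e2 = d1" "m \<cdot> d2 = v"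
      using strong_epiD[OF assms(2) m(2), of d1 v] u v a assms by (simp add: in_hom_iff; blast)
    have "d2 \<cdot> (e2 \<cdot> e1) = u" using d1 d2 a assms by (auto simp: in_hom_iff simp flip: comp_assoc)
    then show "\<exists>d. d \<in> hom C (Cod C (e2 \<cdot> e1)) (Dom C m) \<and> d \<cdot> (e2 \<cdot> e1) = u \<and> m \<cdot> d = v"
      using d2 a assms by auto
  qed
qed

text \<open>Lifting in the square \<open>m \<cdot> e = Id \<cdot> g\<close> gives \<open>d\<close> with \<open>d \<cdot> g = e\<close>, so \<open>g\<close> inherits
  the coequaliser property of \<open>e\<close>.\<close>
lemma strong_epi_regular_epi:
  assumes "strong_epi g"
  shows "regular_epi C g"
proof -
  have epi: "epi g" using assms unfolding strong_epi_def by blast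
  have ga: "g \<in> Arr C" using epi unfolding epi_def by blast
  obtain p q e m where kp: "kernel_pair C g p q" and coeq: "is_coequalizer C p q e"
    and m: "is_mono C m" "Cod C e = Dom C m" "m \<cdot> e = g"
    by (rule image_factorization[OF ga])
  note e = is_coequalizerD[OF coeq] and k = is_pullbackD[OF kp[unfolded kernel_pair_def]]
  have ma: "m \<in> Arr C" "Cod C m = Cod C g" "Dom C e = Dom C g" using m mono_arr e by auto
  obtain d where d: "d \<in> hom C (Cod C g) (Dom C m)" "d \<cdot> g = e"
    using strong_epiD[OF assms m(1) e(3), of "Id C (Cod C g)"] m ma ga cod_in_Obj[OF ga] by auto
  have da: "d \<in> Arr C" "Dom C d = Cod C g" "Cod C d = Dom C m" using d by (auto simp: in_hom_iff)
  have "\<forall>u\<in>Arr C. Dom C u = Cod C p \<and> u \<cdot> p = u \<cdot> q \<longrightarrow>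
      (\<exists>!h. h \<in> hom C (Cod C g) (Cod C u) \<and> h \<cdot> g = u)"
  proof (intro ballI impI)
    fix u assume u: "u \<in> Arr C" "Dom C u = Cod C p \<and> u \<cdot> p = u \<cdot> q"
    obtain h where h: "h \<in> hom C (Cod C e) (Cod C u)" "h \<cdot> e = u"
      using coequalizer_universal[OF coeq u(1)] u by auto
    have ha: "h \<in> Arr C" "Dom C h = Cod C e" "Cod C h = Cod C u" using h by (auto simp: in_hom_iff)
    have "(h \<cdot> d) \<cdot> g = u" using ha da ga m by (simp add: d(2) h(2))
    moreover have "h \<cdot> d \<in> hom C (Cod C g) (Cod C u)" using ha da m by (simp add: in_hom_iff)
    ultimately show "\<exists>!h. h \<in> hom C (Cod C g) (Cod C u) \<and> h \<cdot> g = u"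
      using epiD[OF epi] by (auto simp: in_hom_iff)
  qed
  then have "is_coequalizer C p q g" unfolding is_coequalizer_def using k ga by auto
  then show ?thesis unfolding regular_epi_def by blast
qed

lemma regular_epi_comp:
  "regular_epi C e1 \<Longrightarrow> regular_epi C e2 \<Longrightarrow> Cod C e1 = Dom C e2 \<Longrightarrow> regular_epi C (e2 \<cdot> e1)"
  by (rule strong_epi_regular_epi[OF strong_epi_comp[OF regular_epi_strong_epi regular_epi_strong_epi]])

lemma is_product2D:
  assumes "is_product2 C X Y p1 p2"
  shows "p1 \<in> Arr C" "p2 \<in> Arr C" "Dom C p2 = Dom C p1" "Cod C p1 = X" "Cod C p2 = Y"
  using assms unfolding is_product2_def by auto

lemma product2_universal:
  assumes "is_product2 C X Y p1 p2" "x \<in> hom C Q X" "y \<in> hom C Q Y"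
  shows "\<exists>!h. h \<in> hom C Q (Dom C p1) \<and> p1 \<cdot> h = x \<and> p2 \<cdot> h = y"
proof -
  have "x \<in> Arr C" "y \<in> Arr C" "Dom C x = Dom C y \<and> Cod C x = X \<and> Cod C y = Y"
    and Q: "Dom C x = Q" using assms(2,3) by (auto simp: in_hom_iff)
  then have "\<exists>!h. h \<in> hom C (Dom C x) (Dom C p1) \<and> p1 \<cdot> h = x \<and> p2 \<cdot> h = y"
    using assms(1) unfolding is_product2_def by blast
  then show ?thesis by (simp only: Q)
qed

lemma tuple2_spec:
  assumes "is_product2 C X Y p1 p2" "x \<in> hom C Q X" "y \<in> hom C Q Y"
  shows "tuple2 C p1 p2 x y \<in> hom C Q (Dom C p1)"
    "p1 \<cdot> tuple2 C p1 p2 x y = x" "p2 \<cdot> tuple2 C p1 p2 x y = y"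
proof -
  have "Dom C x = Q" using assms(2) by (simp add: in_hom_iff)
  then show "tuple2 C p1 p2 x y \<in> hom C Q (Dom C p1)"
    "p1 \<cdot> tuple2 C p1 p2 x y = x" "p2 \<cdot> tuple2 C p1 p2 x y = y"
    using theI'[OF product2_universal[OF assms]] unfolding tuple2_def by simp_all
qed

lemma tuple2_unique:
  assumes "is_product2 C X Y p1 p2" "x \<in> hom C Q X" "y \<in> hom C Q Y"
    "h \<in> hom C Q (Dom C p1)" "p1 \<cdot> h = x" "p2 \<cdot> h = y"
  shows "tuple2 C p1 p2 x y = h"
  using product2_universal[OF assms(1-3)] tuple2_spec[OF assms(1-3)] assms(4-6) by blast

lemma tuple2_comp:
  assumes P: "is_product2 C X Y p1 p2" and x: "x \<in> hom C Q X" and y: "y \<in> hom C Q Y"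
    and w: "w \<in> hom C R Q"
  shows "tuple2 C p1 p2 x y \<cdot> w = tuple2 C p1 p2 (x \<cdot> w) (y \<cdot> w)"
proof -
  note t = tuple2_spec[OF P x y] and p = is_product2D[OF P]
  have a: "tuple2 C p1 p2 x y \<in> Arr C" "Cod C (tuple2 C p1 p2 x y) = Dom C p1"
    "w \<in> Arr C" "Dom C w = R" "Cod C w = Q" "Dom C (tuple2 C p1 p2 x y) = Q"
    using t(1) w by (auto simp: in_hom_iff)
  show ?thesis
  proof (rule tuple2_unique[OF P, symmetric])
    show "x \<cdot> w \<in> hom C R X" "y \<cdot> w \<in> hom C R Y" using x y a by (auto simp: in_hom_iff)
    show "tuple2 C p1 p2 x y \<cdot> w \<in> hom C R (Dom C p1)" using t(1) a by (auto simp: in_hom_iff)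
    show "p1 \<cdot> (tuple2 C p1 p2 x y \<cdot> w) = x \<cdot> w" using comp_reassoc[OF t(2) p(1) a(1) a(3)] a p by (simp add: a(6))
    show "p2 \<cdot> (tuple2 C p1 p2 x y \<cdot> w) = y \<cdot> w" using comp_reassoc[OF t(3) p(2) a(1) a(3)] a p by (simp add: a(6))
  qed
qed

lemma tuple2_eq_iff:
  assumes P: "is_product2 C X Y p1 p2" and "x \<in> hom C Q X" "y \<in> hom C Q Y"
    "x' \<in> hom C Q X" "y' \<in> hom C Q Y"
  shows "tuple2 C p1 p2 x y = tuple2 C p1 p2 x' y' \<longleftrightarrow> x = x' \<and> y = y'"
proof
  assume "tuple2 C p1 p2 x y = tuple2 C p1 p2 x' y'"
  then have "p1 \<cdot> tuple2 C p1 p2 x y = p1 \<cdot> tuple2 C p1 p2 x' y'"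
    "p2 \<cdot> tuple2 C p1 p2 x y = p2 \<cdot> tuple2 C p1 p2 x' y'" by simp_all
  then show "x = x' \<and> y = y'" unfolding tuple2_spec(2,3)[OF P assms(2,3)] tuple2_spec(2,3)[OF P assms(4,5)] by (rule conjI)
qed simp

lemma product2_exists:
  assumes "Y1 \<in> Obj C" "Y2 \<in> Obj C"
  obtains p1 p2 where "is_product2 C Y1 Y2 p1 p2"
proof -
  obtain T where T: "terminal C T" using terminal_exists by blast
  have to_T: "\<And>A. A \<in> Obj C \<Longrightarrow> \<exists>!f. f \<in> hom C A T" using T unfolding terminal_def by blast
  obtain t1 t2 where t: "t1 \<in> hom C Y1 T" "t2 \<in> hom C Y2 T" using to_T assms by blast
  have ta: "t1 \<in> Arr C" "t2 \<in> Arr C" "Cod C t1 = Cod C t2" "Dom C t1 = Y1" "Dom C t2 = Y2"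
    using t by (auto simp: in_hom_iff)
  obtain p q where pb: "is_pullback C t1 t2 p q" using pullback_exists[OF ta(1-3)] by blast
  note P = is_pullbackD[OF pb]
  have "\<exists>!h. h \<in> hom C (Dom C x) (Dom C p) \<and> p \<cdot> h = x \<and> q \<cdot> h = y"
    if x: "x \<in> Arr C" "Cod C x = Y1" and y: "y \<in> Arr C" "Cod C y = Y2" "Dom C x = Dom C y" for x y
  proof -
    have "t1 \<cdot> x \<in> hom C (Dom C x) T" "t2 \<cdot> y \<in> hom C (Dom C x) T"
      using x y ta t by (auto simp: in_hom_iff)
    then have "t1 \<cdot> x = t2 \<cdot> y" using to_T[OF dom_in_Obj[OF x(1)]] by blast
    then show ?thesis using pullback_universal[OF pb x(1) y(1)] x y ta by simp
  qed
  then have "is_product2 C Y1 Y2 p q" unfolding is_product2_def using P ta by auto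
  then show ?thesis by (rule that)
qed

lemma is_product3D:
  assumes "is_product3 C X Y Z p1 p2 p3"
  shows "p1 \<in> Arr C" "p2 \<in> Arr C" "p3 \<in> Arr C" "Dom C p2 = Dom C p1" "Dom C p3 = Dom C p1"
    "Cod C p1 = X" "Cod C p2 = Y" "Cod C p3 = Z"
  using assms unfolding is_product3_def by auto

lemma product3_universal:
  assumes "is_product3 C X Y Z p1 p2 p3" "x \<in> hom C Q X" "y \<in> hom C Q Y" "z \<in> hom C Q Z"
  shows "\<exists>!h. h \<in> hom C Q (Dom C p1) \<and> p1 \<cdot> h = x \<and> p2 \<cdot> h = y \<and> p3 \<cdot> h = z"
proof -
  have "x \<in> Arr C" "y \<in> Arr C" "z \<in> Arr C" "Dom C x = Dom C y \<and> Dom C x = Dom C z \<and>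
      Cod C x = X \<and> Cod C y = Y \<and> Cod C z = Z" and Q: "Dom C x = Q"
    using assms(2-4) by (auto simp: in_hom_iff)
  then have "\<exists>!h. h \<in> hom C (Dom C x) (Dom C p1) \<and> p1 \<cdot> h = x \<and> p2 \<cdot> h = y \<and> p3 \<cdot> h = z"
    using assms(1) unfolding is_product3_def by blast
  then show ?thesis by (simp only: Q)
qed

lemma tuple3_spec:
  assumes "is_product3 C X Y Z p1 p2 p3" "x \<in> hom C Q X" "y \<in> hom C Q Y" "z \<in> hom C Q Z"
  shows "tuple3 C p1 p2 p3 x y z \<in> hom C Q (Dom C p1)" "p1 \<cdot> tuple3 C p1 p2 p3 x y z = x"
    "p2 \<cdot> tuple3 C p1 p2 p3 x y z = y" "p3 \<cdot> tuple3 C p1 p2 p3 x y z = z"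
proof -
  have "Dom C x = Q" using assms(2) by (simp add: in_hom_iff)
  then show "tuple3 C p1 p2 p3 x y z \<in> hom C Q (Dom C p1)" "p1 \<cdot> tuple3 C p1 p2 p3 x y z = x"
    "p2 \<cdot> tuple3 C p1 p2 p3 x y z = y" "p3 \<cdot> tuple3 C p1 p2 p3 x y z = z"
    using theI'[OF product3_universal[OF assms]] unfolding tuple3_def by simp_all
qed

lemma tuple3_unique:
  assumes "is_product3 C X Y Z p1 p2 p3" "x \<in> hom C Q X" "y \<in> hom C Q Y" "z \<in> hom C Q Z"
    "h \<in> hom C Q (Dom C p1)" "p1 \<cdot> h = x" "p2 \<cdot> h = y" "p3 \<cdot> h = z"
  shows "tuple3 C p1 p2 p3 x y z = h"
  using product3_universal[OF assms(1-4)] tuple3_spec[OF assms(1-4)] assms(5-8) by blast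

lemma tuple3_comp:
  assumes P: "is_product3 C X Y Z p1 p2 p3" and x: "x \<in> hom C Q X" and y: "y \<in> hom C Q Y"
    and z: "z \<in> hom C Q Z" and w: "w \<in> hom C R Q"
  shows "tuple3 C p1 p2 p3 x y z \<cdot> w = tuple3 C p1 p2 p3 (x \<cdot> w) (y \<cdot> w) (z \<cdot> w)"
proof -
  note t = tuple3_spec[OF P x y z] and p = is_product3D[OF P]
  have a: "tuple3 C p1 p2 p3 x y z \<in> Arr C" "Cod C (tuple3 C p1 p2 p3 x y z) = Dom C p1"
    "w \<in> Arr C" "Dom C w = R" "Cod C w = Q" "Dom C (tuple3 C p1 p2 p3 x y z) = Q"
    using t(1) w by (auto simp: in_hom_iff)
  show ?thesis
  proof (rule tuple3_unique[OF P, symmetric])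
    show "x \<cdot> w \<in> hom C R X" "y \<cdot> w \<in> hom C R Y" "z \<cdot> w \<in> hom C R Z"
      using x y z a by (auto simp: in_hom_iff)
    show "tuple3 C p1 p2 p3 x y z \<cdot> w \<in> hom C R (Dom C p1)" using t(1) a by (auto simp: in_hom_iff)
    show "p1 \<cdot> (tuple3 C p1 p2 p3 x y z \<cdot> w) = x \<cdot> w" using comp_reassoc[OF t(2) p(1) a(1) a(3)] a p by (simp add: a(6))
    show "p2 \<cdot> (tuple3 C p1 p2 p3 x y z \<cdot> w) = y \<cdot> w" using comp_reassoc[OF t(3) p(2) a(1) a(3)] a p by (simp add: a(6))
    show "p3 \<cdot> (tuple3 C p1 p2 p3 x y z \<cdot> w) = z \<cdot> w" using comp_reassoc[OF t(4) p(3) a(1) a(3)] a p by (simp add: a(6))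
  qed
qed

lemma tuple3_eq_iff:
  assumes P: "is_product3 C X Y Z p1 p2 p3" and "x \<in> hom C Q X" "y \<in> hom C Q Y" "z \<in> hom C Q Z"
    "x' \<in> hom C Q X" "y' \<in> hom C Q Y" "z' \<in> hom C Q Z"
  shows "tuple3 C p1 p2 p3 x y z = tuple3 C p1 p2 p3 x' y' z' \<longleftrightarrow> x = x' \<and> y = y' \<and> z = z'"
proof
  assume "tuple3 C p1 p2 p3 x y z = tuple3 C p1 p2 p3 x' y' z'"
  then have "p1 \<cdot> tuple3 C p1 p2 p3 x y z = p1 \<cdot> tuple3 C p1 p2 p3 x' y' z'"
    "p2 \<cdot> tuple3 C p1 p2 p3 x y z = p2 \<cdot> tuple3 C p1 p2 p3 x' y' z'"
    "p3 \<cdot> tuple3 C p1 p2 p3 x y z = p3 \<cdot> tuple3 C p1 p2 p3 x' y' z'" by simp_all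
  then show "x = x' \<and> y = y' \<and> z = z'"
    unfolding tuple3_spec(2-4)[OF P assms(2-4)] tuple3_spec(2-4)[OF P assms(5-7)] by blast
qed simp

lemma product3_exists:
  assumes "Y1 \<in> Obj C" "Y2 \<in> Obj C" "Y3 \<in> Obj C"
  obtains p1 p2 p3 where "is_product3 C Y1 Y2 Y3 p1 p2 p3"
proof -
  obtain a1 a2 where A: "is_product2 C Y1 Y2 a1 a2" using product2_exists assms by metis
  note a = is_product2D[OF A]
  obtain r1 r2 where R: "is_product2 C (Dom C a1) Y3 r1 r2"
    using product2_exists[OF dom_in_Obj[OF a(1)] assms(3)] by metis
  note r = is_product2D[OF R]
  have "\<forall>x\<in>Arr C. \<forall>y\<in>Arr C. \<forall>z\<in>Arr C. Dom C x = Dom C y \<and> Dom C x = Dom C z \<and>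
      Cod C x = Y1 \<and> Cod C y = Y2 \<and> Cod C z = Y3 \<longrightarrow>
      (\<exists>!h. h \<in> hom C (Dom C x) (Dom C (a1 \<cdot> r1)) \<and> (a1 \<cdot> r1) \<cdot> h = x \<and> (a2 \<cdot> r1) \<cdot> h = y \<and> r2 \<cdot> h = z)"
  proof (intro ballI impI)
    fix x y z assume "x \<in> Arr C" "y \<in> Arr C" "z \<in> Arr C" and H: "Dom C x = Dom C y \<and>
      Dom C x = Dom C z \<and> Cod C x = Y1 \<and> Cod C y = Y2 \<and> Cod C z = Y3"
    then have x: "x \<in> hom C (Dom C x) Y1" and y: "y \<in> hom C (Dom C x) Y2"
      and z: "z \<in> hom C (Dom C x) Y3" by (auto simp: in_hom_iff)
    define h where "h = tuple2 C r1 r2 (tuple2 C a1 a2 x y) z"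
    note t12 = tuple2_spec[OF A x y]
    note t = tuple2_spec[OF R t12(1) z, folded h_def]
    have ha: "h \<in> Arr C" "Cod C h = Dom C r1" using t(1) by (auto simp: in_hom_iff)
    have h: "h \<in> hom C (Dom C x) (Dom C (a1 \<cdot> r1))" "(a1 \<cdot> r1) \<cdot> h = x"
      "(a2 \<cdot> r1) \<cdot> h = y" "r2 \<cdot> h = z"
      using t t12 ha a r by (auto simp: in_hom_iff)
    have "k = h" if k: "k \<in> hom C (Dom C x) (Dom C (a1 \<cdot> r1))" "(a1 \<cdot> r1) \<cdot> k = x"
      "(a2 \<cdot> r1) \<cdot> k = y" "r2 \<cdot> k = z" for k
    proof -
      have ka: "k \<in> Arr C" "Cod C k = Dom C r1" "r1 \<cdot> k \<in> hom C (Dom C x) (Dom C a1)"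
        using k(1) a r by (auto simp: in_hom_iff)
      have "a1 \<cdot> (r1 \<cdot> k) = x" "a2 \<cdot> (r1 \<cdot> k) = y"
        using k(2,3) ka(1,2) a r by (simp_all flip: comp_assoc)
      then have "r1 \<cdot> k = tuple2 C a1 a2 x y" using tuple2_unique[OF A x y ka(3)] by simp
      then show "k = h" using tuple2_unique[OF R t12(1) z _ _ k(4)] k(1) a r unfolding h_def by simp
    qed
    then show "\<exists>!h. h \<in> hom C (Dom C x) (Dom C (a1 \<cdot> r1)) \<and> (a1 \<cdot> r1) \<cdot> h = x \<and>
        (a2 \<cdot> r1) \<cdot> h = y \<and> r2 \<cdot> h = z"
      using h by blast
  qed
  then have "is_product3 C Y1 Y2 Y3 (a1 \<cdot> r1) (a2 \<cdot> r1) r2"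
    unfolding is_product3_def using a r by simp
  then show ?thesis by (rule that)
qed

lemma majority_categoryD:
  assumes "majority_category C" "is_product3 C X Y Z p1 p2 p3" "is_mono C m" "Cod C m = Dom C p1"
    "x \<in> hom C Q X" "x' \<in> hom C Q X" "y \<in> hom C Q Y" "y' \<in> hom C Q Y"
    "z \<in> hom C Q Z" "z' \<in> hom C Q Z"
    "gmem C (tuple3 C p1 p2 p3 x y z') m" "gmem C (tuple3 C p1 p2 p3 x y' z) m"
    "gmem C (tuple3 C p1 p2 p3 x' y z) m"
  shows "gmem C (tuple3 C p1 p2 p3 x y z) m"
proof -
  note p = is_product3D[OF assms(2)]
  have "X \<in> Obj C" "Y \<in> Obj C" "Z \<in> Obj C"
    using cod_in_Obj[OF p(1)] cod_in_Obj[OF p(2)] cod_in_Obj[OF p(3)] by (simp_all only: p(6-8))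
  moreover have "Q \<in> Obj C" using dom_in_Obj assms(5) by (auto simp: in_hom_iff)
  ultimately have "majority_selecting C X Y Z p1 p2 p3 m" "Q \<in> Obj C"
    using assms(1-4) unfolding majority_category_def by blast+
  then show ?thesis using assms(5-13) unfolding majority_selecting_def by blast
qed

lemma regular_image:
  assumes F: "F \<in> Arr C"
  obtains e m where "regular_epi C e" "is_mono C m" "e \<in> hom C (Dom C F) (Dom C m)"
    "Cod C m = Cod C F" "m \<cdot> e = F"
proof -
  obtain p q e m where kp: "kernel_pair C F p q" and coeq: "is_coequalizer C p q e"
    and m: "is_mono C m" "Cod C e = Dom C m" and F_eq: "m \<cdot> e = F"
    by (rule image_factorization[OF F])
  note e = is_coequalizerD[OF coeq] and k = is_pullbackD[OF kp[unfolded kernel_pair_def]]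
  have "Cod C (m \<cdot> e) = Cod C m" "Dom C (m \<cdot> e) = Dom C e"
    using mono_arr[OF m(1)] e(3) m(2) by simp_all
  then have "Cod C m = Cod C F" "e \<in> hom C (Dom C F) (Dom C m)"
    using e(3) m(2) by (simp_all add: F_eq in_hom_iff)
  moreover have "regular_epi C e" using coeq unfolding regular_epi_def by blast
  ultimately show ?thesis using that m(1) F_eq by blast
qed

lemma gmem_image:
  assumes "m \<cdot> e = F" "m \<in> Arr C" "e \<in> Arr C" "Cod C e = Dom C m" "b \<in> Arr C" "Cod C b = Dom C e"
  shows "gmem C (F \<cdot> b) m"
proof -
  have "m \<cdot> (e \<cdot> b) = F \<cdot> b" by (rule comp_reassoc[OF assms(1,2,3,5,4,6)])
  moreover have "e \<cdot> b \<in> hom C (Dom C (m \<cdot> (e \<cdot> b))) (Dom C m)" using assms(2-6) by (simp add: in_hom_iff)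
  ultimately show ?thesis unfolding gmem_def by metis
qed

lemma gmem_lift:
  assumes e: "regular_epi C e" and m: "is_mono C m" "Cod C e = Dom C m" and w: "gmem C w m"
  obtains v u where "regular_epi C v" "Cod C v = Dom C w" "u \<in> hom C (Dom C v) (Dom C e)"
    "m \<cdot> (e \<cdot> u) = w \<cdot> v"
proof -
  obtain s where s: "s \<in> hom C (Dom C w) (Dom C m)" "m \<cdot> s = w" using w unfolding gmem_def by blast
  have sa: "s \<in> Arr C" "Cod C s = Cod C e" using s(1) m by (auto simp: in_hom_iff)
  obtain u v where uv: "regular_epi C v" "u \<in> hom C (Dom C v) (Dom C e)"
    "v \<in> hom C (Dom C v) (Dom C s)" and euv: "e \<cdot> u = s \<cdot> v"
    using regular_epi_lift[OF e sa] .
  have a: "v \<in> Arr C" "Cod C v = Dom C s" "Cod C s = Dom C m" "Dom C s = Dom C w"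
    using uv(3) s(1) by (auto simp: in_hom_iff)
  have "m \<cdot> (e \<cdot> u) = m \<cdot> (s \<cdot> v)" by (simp only: euv)
  also have "\<dots> = w \<cdot> v" by (rule comp_reassoc[OF s(2) mono_arr[OF m(1)] sa(1) a(1) a(3) a(2)])
  finally show ?thesis using that uv(1,2) a(2,4) by simp
qed

text \<open>Majority is applied to the image of \<open>\<langle>f1, f2, f3\<rangle> : X \<rightarrow> Y1 \<times> Y2 \<times> Y3\<close>.\<close>
lemma majority_lift:
  assumes maj: "majority_category C"
    and f: "f1 \<in> hom C X Y1" "f2 \<in> hom C X Y2" "f3 \<in> hom C X Y3"
    and xyz: "x \<in> hom C Q Y1" "y \<in> hom C Q Y2" "z \<in> hom C Q Y3"
    and b: "b1 \<in> hom C Q X" "b2 \<in> hom C Q X" "b3 \<in> hom C Q X"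
    and eq: "f1 \<cdot> b1 = x" "f2 \<cdot> b1 = y" "f1 \<cdot> b2 = x" "f3 \<cdot> b2 = z" "f2 \<cdot> b3 = y" "f3 \<cdot> b3 = z"
  obtains v u where "regular_epi C v" "v \<in> hom C (Dom C v) Q" "u \<in> hom C (Dom C v) X"
    "f1 \<cdot> u = x \<cdot> v" "f2 \<cdot> u = y \<cdot> v" "f3 \<cdot> u = z \<cdot> v"
proof -
  have "Y1 \<in> Obj C" "Y2 \<in> Obj C" "Y3 \<in> Obj C" using f cod_in_Obj by (auto simp: in_hom_iff)
  then obtain p1 p2 p3 where P: "is_product3 C Y1 Y2 Y3 p1 p2 p3" by (rule product3_exists)
  define F where "F = tuple3 C p1 p2 p3 f1 f2 f3"
  have F: "F \<in> Arr C" "Dom C F = X" "Cod C F = Dom C p1"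
    using tuple3_spec(1)[OF P f] unfolding F_def by (auto simp: in_hom_iff)
  obtain e m where e: "regular_epi C e" "is_mono C m" "e \<in> hom C X (Dom C m)"
    and m: "Cod C m = Dom C p1" and F_eq: "m \<cdot> e = F"
    using regular_image[OF F(1)] F by metis
  have F_comp: "F \<cdot> b = tuple3 C p1 p2 p3 (f1 \<cdot> b) (f2 \<cdot> b) (f3 \<cdot> b)" if "b \<in> hom C R X" for R b
    unfolding F_def by (rule tuple3_comp[OF P f that])
  have ea: "e \<in> Arr C" "Cod C e = Dom C m" "Dom C e = X" using e(3) by (auto simp: in_hom_iff)
  have image: "gmem C (tuple3 C p1 p2 p3 (f1 \<cdot> b) (f2 \<cdot> b) (f3 \<cdot> b)) m" if b: "b \<in> hom C Q X" for b
  proof -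
    have "b \<in> Arr C" "Cod C b = Dom C e" using b ea by (auto simp: in_hom_iff)
    from gmem_image[OF F_eq mono_arr[OF e(2)] ea(1,2) this] show ?thesis unfolding F_comp[OF b] .
  qed
  have fb: "f3 \<cdot> b1 \<in> hom C Q Y3" "f2 \<cdot> b2 \<in> hom C Q Y2" "f1 \<cdot> b3 \<in> hom C Q Y1"
    using f b by (auto simp: in_hom_iff)
  have "gmem C (tuple3 C p1 p2 p3 x y (f3 \<cdot> b1)) m" using image[OF b(1)] unfolding eq(1,2) .
  moreover have "gmem C (tuple3 C p1 p2 p3 x (f2 \<cdot> b2) z) m" using image[OF b(2)] unfolding eq(3,4) .
  moreover have "gmem C (tuple3 C p1 p2 p3 (f1 \<cdot> b3) y z) m" using image[OF b(3)] unfolding eq(5,6) .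
  ultimately have "gmem C (tuple3 C p1 p2 p3 x y z) m"
    by (rule majority_categoryD[OF maj P e(2) m xyz(1) fb(3) xyz(2) fb(2) xyz(3) fb(1)])
  then obtain v u where v: "regular_epi C v" "Cod C v = Dom C (tuple3 C p1 p2 p3 x y z)"
    "u \<in> hom C (Dom C v) (Dom C e)" and lift: "m \<cdot> (e \<cdot> u) = tuple3 C p1 p2 p3 x y z \<cdot> v"
    using gmem_lift[OF e(1,2)] e(3) by (metis in_hom_iff)
  have vu: "v \<in> hom C (Dom C v) Q" "u \<in> hom C (Dom C v) X" "u \<in> Arr C" "Cod C u = Dom C e"
    using v regular_epi_arr tuple3_spec(1)[OF P xyz] e(3) by (auto simp: in_hom_iff)
  have "tuple3 C p1 p2 p3 (f1 \<cdot> u) (f2 \<cdot> u) (f3 \<cdot> u) = m \<cdot> (e \<cdot> u)"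
    using comp_reassoc[OF F_eq mono_arr[OF e(2)] _ vu(3) _ vu(4)] F_comp[OF vu(2)] e(3)
    by (simp add: in_hom_iff)
  also have "\<dots> = tuple3 C p1 p2 p3 (x \<cdot> v) (y \<cdot> v) (z \<cdot> v)"
    by (simp only: lift tuple3_comp[OF P xyz vu(1)])
  finally have "f1 \<cdot> u = x \<cdot> v \<and> f2 \<cdot> u = y \<cdot> v \<and> f3 \<cdot> u = z \<cdot> v"
    by (subst (asm) tuple3_eq_iff[OF P]) (use f xyz vu in \<open>auto simp: in_hom_iff\<close>)
  then show ?thesis using that v(1) vu(1,2) by blast
qed

text \<open>A system \<open>x \<equiv> a i mod ker (f i)\<close> is encoded as the equations \<open>f i \<cdot> x = c i\<close> with
  \<open>c i = f i \<cdot> a i\<close>; an approximate solution lives on a regular-epi cover \<open>\<alpha>\<close> of \<open>S\<close>.\<close>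
definition kernel_system :: "'o \<Rightarrow> 'o \<Rightarrow> nat set \<Rightarrow> (nat \<Rightarrow> 'a) \<Rightarrow> (nat \<Rightarrow> 'a) \<Rightarrow> bool" where
  "kernel_system X S I f c \<longleftrightarrow> (\<forall>i\<in>I. f i \<in> Arr C \<and> Dom C (f i) = X \<and> c i \<in> hom C S (Cod C (f i)))"

definition kernel_solution ::
  "'o \<Rightarrow> 'o \<Rightarrow> nat set \<Rightarrow> (nat \<Rightarrow> 'a) \<Rightarrow> (nat \<Rightarrow> 'a) \<Rightarrow> 'a \<Rightarrow> 'a \<Rightarrow> bool" where
  "kernel_solution X S I f c \<alpha> b \<longleftrightarrow> regular_epi C \<alpha> \<and> Cod C \<alpha> = S \<and> b \<in> hom C (Dom C \<alpha>) X \<and>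
     (\<forall>i\<in>I. f i \<cdot> b = c i \<cdot> \<alpha>)"

definition kernel_solvable :: "'o \<Rightarrow> 'o \<Rightarrow> nat set \<Rightarrow> (nat \<Rightarrow> 'a) \<Rightarrow> (nat \<Rightarrow> 'a) \<Rightarrow> bool" where
  "kernel_solvable X S I f c \<longleftrightarrow> (\<exists>\<alpha> b. kernel_solution X S I f c \<alpha> b)"

lemma kernel_system_mono: "J \<subseteq> I \<Longrightarrow> kernel_system X S I f c \<Longrightarrow> kernel_system X S J f c"
  unfolding kernel_system_def by blast

lemma kernel_solvable_cong:
  "(\<And>l. l \<in> K \<Longrightarrow> f l = f' l) \<Longrightarrow> (\<And>l. l \<in> K \<Longrightarrow> c l = c' l) \<Longrightarrow>
    kernel_solvable X S K f c \<longleftrightarrow> kernel_solvable X S K f' c'"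
  unfolding kernel_solvable_def kernel_solution_def by simp

lemma kernel_solution_comp:
  assumes sol: "kernel_solution X S I f c \<alpha> b" and sys: "kernel_system X S I f c"
    and \<delta>: "\<delta> \<in> Arr C" "Cod C \<delta> = Dom C \<alpha>" and reg: "regular_epi C (\<alpha> \<cdot> \<delta>)"
  shows "kernel_solution X S I f c (\<alpha> \<cdot> \<delta>) (b \<cdot> \<delta>)"
proof -
  have a: "\<alpha> \<in> Arr C" "Cod C \<alpha> = S" "b \<in> Arr C" "Dom C b = Dom C \<alpha>" "Cod C b = X"
    using sol regular_epi_arr unfolding kernel_solution_def by (auto simp: in_hom_iff)
  have "f i \<cdot> (b \<cdot> \<delta>) = c i \<cdot> (\<alpha> \<cdot> \<delta>)" if i: "i \<in> I" for i
  proof -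
    have fc: "f i \<in> Arr C" "Dom C (f i) = X" "c i \<in> Arr C" "Dom C (c i) = S"
      using sys i unfolding kernel_system_def by (auto simp: in_hom_iff)
    have "f i \<cdot> b = c i \<cdot> \<alpha>" using sol i unfolding kernel_solution_def by blast
    then show ?thesis by (rule comp_eq_whisker) (use fc a \<delta> in simp_all)
  qed
  then show ?thesis unfolding kernel_solution_def using reg a \<delta> by (simp add: in_hom_iff)
qed

lemma kernel_solvable_common_cover:
  assumes sys: "kernel_system X S (I \<union> J \<union> K) f c" and sol: "kernel_solvable X S I f c"
    "kernel_solvable X S J f c" "kernel_solvable X S K f c"
  obtains \<gamma> bI bJ bK where "kernel_solution X S I f c \<gamma> bI" "kernel_solution X S J f c \<gamma> bJ"
    "kernel_solution X S K f c \<gamma> bK"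
proof -
  have sysI: "kernel_system X S I f c" and sysJ: "kernel_system X S J f c"
    and sysK: "kernel_system X S K f c" using kernel_system_mono[OF _ sys] by blast+
  obtain \<alpha>1 b1 \<alpha>2 b2 \<alpha>3 b3 where s: "kernel_solution X S I f c \<alpha>1 b1" "kernel_solution X S J f c \<alpha>2 b2"
    "kernel_solution X S K f c \<alpha>3 b3" using sol unfolding kernel_solvable_def by blast
  have r: "regular_epi C \<alpha>1" "regular_epi C \<alpha>2" "regular_epi C \<alpha>3"
    and S: "Cod C \<alpha>1 = S" "Cod C \<alpha>2 = S" "Cod C \<alpha>3 = S" using s unfolding kernel_solution_def by blast+
  obtain u v where v: "regular_epi C v" "u \<in> hom C (Dom C v) (Dom C \<alpha>1)" "v \<in> hom C (Dom C v) (Dom C \<alpha>2)"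
    and uv: "\<alpha>1 \<cdot> u = \<alpha>2 \<cdot> v"
    using regular_epi_lift[OF r(1) regular_epi_arr[OF r(2)]] S by metis
  have va: "u \<in> Arr C" "Cod C u = Dom C \<alpha>1" "v \<in> Arr C" "Cod C v = Dom C \<alpha>2"
    using v by (auto simp: in_hom_iff)
  have \<beta>: "regular_epi C (\<alpha>2 \<cdot> v)" using regular_epi_comp[OF v(1) r(2) va(4)] .
  have sI: "kernel_solution X S I f c (\<alpha>2 \<cdot> v) (b1 \<cdot> u)"
    using kernel_solution_comp[OF s(1) sysI va(1,2)] \<beta> uv by simp
  have sJ: "kernel_solution X S J f c (\<alpha>2 \<cdot> v) (b2 \<cdot> v)"
    using kernel_solution_comp[OF s(2) sysJ va(3,4) \<beta>] .
  have \<beta>S: "Cod C (\<alpha>2 \<cdot> v) = Cod C \<alpha>3" using sJ S unfolding kernel_solution_def by simp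
  obtain u' v' where v': "regular_epi C v'" "u' \<in> hom C (Dom C v') (Dom C (\<alpha>2 \<cdot> v))"
    "v' \<in> hom C (Dom C v') (Dom C \<alpha>3)" and uv': "(\<alpha>2 \<cdot> v) \<cdot> u' = \<alpha>3 \<cdot> v'"
    using regular_epi_lift[OF \<beta> regular_epi_arr[OF r(3)] \<beta>S[symmetric]] by metis
  have va': "u' \<in> Arr C" "Cod C u' = Dom C (\<alpha>2 \<cdot> v)" "v' \<in> Arr C" "Cod C v' = Dom C \<alpha>3"
    using v' by (auto simp: in_hom_iff)
  have \<gamma>: "regular_epi C (\<alpha>3 \<cdot> v')" using regular_epi_comp[OF v'(1) r(3) va'(4)] .
  show ?thesis
  proof (rule that)
    show "kernel_solution X S I f c (\<alpha>3 \<cdot> v') ((b1 \<cdot> u) \<cdot> u')"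
      using kernel_solution_comp[OF sI sysI va'(1,2)] \<gamma> uv' by simp
    show "kernel_solution X S J f c (\<alpha>3 \<cdot> v') ((b2 \<cdot> v) \<cdot> u')"
      using kernel_solution_comp[OF sJ sysJ va'(1,2)] \<gamma> uv' by simp
    show "kernel_solution X S K f c (\<alpha>3 \<cdot> v') (b3 \<cdot> v')"
      using kernel_solution_comp[OF s(3) sysK va'(3,4) \<gamma>] .
  qed
qed

lemma kernel_solvable_triple:
  assumes maj: "majority_category C" and sys: "kernel_system X S {i, j, k} f c"
    and "kernel_solvable X S {i, j} f c" "kernel_solvable X S {i, k} f c" "kernel_solvable X S {j, k} f c"
  shows "kernel_solvable X S {i, j, k} f c"
proof -
  have sys': "kernel_system X S ({i, j} \<union> {i, k} \<union> {j, k}) f c" using sys by (simp add: insert_commute)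
  obtain \<gamma> b1 b2 b3 where s: "kernel_solution X S {i, j} f c \<gamma> b1" "kernel_solution X S {i, k} f c \<gamma> b2"
    "kernel_solution X S {j, k} f c \<gamma> b3"
    using kernel_solvable_common_cover[OF sys' assms(3-5)] by blast
  have \<gamma>: "regular_epi C \<gamma>" "\<gamma> \<in> Arr C" "Cod C \<gamma> = S"
    and b: "b1 \<in> hom C (Dom C \<gamma>) X" "b2 \<in> hom C (Dom C \<gamma>) X" "b3 \<in> hom C (Dom C \<gamma>) X"
    and eq: "f i \<cdot> b1 = c i \<cdot> \<gamma>" "f j \<cdot> b1 = c j \<cdot> \<gamma>" "f i \<cdot> b2 = c i \<cdot> \<gamma>" "f k \<cdot> b2 = c k \<cdot> \<gamma>"
      "f j \<cdot> b3 = c j \<cdot> \<gamma>" "f k \<cdot> b3 = c k \<cdot> \<gamma>"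
    using s regular_epi_arr unfolding kernel_solution_def by auto
  have ca: "c l \<in> Arr C" "Dom C (c l) = S" if "l \<in> {i, j, k}" for l
    using sys that unfolding kernel_system_def by (auto simp: in_hom_iff)
  have f: "f i \<in> hom C X (Cod C (f i))" "f j \<in> hom C X (Cod C (f j))" "f k \<in> hom C X (Cod C (f k))"
    and cl: "c i \<cdot> \<gamma> \<in> hom C (Dom C \<gamma>) (Cod C (f i))" "c j \<cdot> \<gamma> \<in> hom C (Dom C \<gamma>) (Cod C (f j))"
      "c k \<cdot> \<gamma> \<in> hom C (Dom C \<gamma>) (Cod C (f k))"
    using sys \<gamma>(2,3) unfolding kernel_system_def by (auto simp: in_hom_iff)
  obtain v u where v: "regular_epi C v" "v \<in> hom C (Dom C v) (Dom C \<gamma>)" "u \<in> hom C (Dom C v) X"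
    and sol: "f i \<cdot> u = (c i \<cdot> \<gamma>) \<cdot> v" "f j \<cdot> u = (c j \<cdot> \<gamma>) \<cdot> v" "f k \<cdot> u = (c k \<cdot> \<gamma>) \<cdot> v"
    by (rule majority_lift[OF maj f cl b eq])
  have va: "v \<in> Arr C" "Cod C v = Dom C \<gamma>" "Dom C (\<gamma> \<cdot> v) = Dom C v" "Cod C (\<gamma> \<cdot> v) = S"
    using v(2) \<gamma> by (auto simp: in_hom_iff)
  have "f l \<cdot> u = c l \<cdot> (\<gamma> \<cdot> v)" if l: "l \<in> {i, j, k}" for l
  proof -
    have "f l \<cdot> u = (c l \<cdot> \<gamma>) \<cdot> v" using l sol by blast
    also have "\<dots> = c l \<cdot> (\<gamma> \<cdot> v)" using ca[OF l] \<gamma>(2,3) va(1,2) by simp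
    finally show ?thesis .
  qed
  then have "kernel_solution X S {i, j, k} f c (\<gamma> \<cdot> v) u"
    unfolding kernel_solution_def using regular_epi_comp[OF v(1) \<gamma>(1) va(2)] va v(3) by simp
  then show ?thesis unfolding kernel_solvable_def by blast
qed

lemma ball_merge_iff:
  assumes "i \<in> K" "Q i \<longleftrightarrow> P i \<and> P j" "\<And>l. l \<noteq> i \<Longrightarrow> Q l \<longleftrightarrow> P l"
  shows "(\<forall>l\<in>K. Q l) \<longleftrightarrow> (\<forall>l\<in>insert j K. P l)"
  using assms by (metis insert_iff)

lemma kernel_solvable_merge:
  assumes P: "is_product2 C (Cod C (f i)) (Cod C (f j)) q1 q2" and sys: "kernel_system X S {i, j} f c"
    and i: "i \<in> K"
  shows "kernel_solvable X S K (f(i := tuple2 C q1 q2 (f i) (f j))) (c(i := tuple2 C q1 q2 (c i) (c j)))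
    \<longleftrightarrow> kernel_solvable X S (insert j K) f c"
proof -
  define f' where "f' = f(i := tuple2 C q1 q2 (f i) (f j))"
  define c' where "c' = c(i := tuple2 C q1 q2 (c i) (c j))"
  have fi: "f i \<in> hom C X (Cod C (f i))" "c i \<in> hom C S (Cod C (f i))"
    and fj: "f j \<in> hom C X (Cod C (f j))" "c j \<in> hom C S (Cod C (f j))"
    using sys unfolding kernel_system_def by (auto simp: in_hom_iff)
  have merged: "f' i \<cdot> b = c' i \<cdot> \<alpha> \<longleftrightarrow> f i \<cdot> b = c i \<cdot> \<alpha> \<and> f j \<cdot> b = c j \<cdot> \<alpha>"
    if \<alpha>: "\<alpha> \<in> hom C Q S" and b: "b \<in> hom C Q X" for Q \<alpha> b
  proof -
    have "f i \<cdot> b \<in> hom C Q (Cod C (f i))" "f j \<cdot> b \<in> hom C Q (Cod C (f j))"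
      "c i \<cdot> \<alpha> \<in> hom C Q (Cod C (f i))" "c j \<cdot> \<alpha> \<in> hom C Q (Cod C (f j))"
      using fi fj \<alpha> b by (auto simp: in_hom_iff)
    note eq_iff = tuple2_eq_iff[OF P this]
    show ?thesis unfolding f'_def c'_def fun_upd_same
      tuple2_comp[OF P fi(1) fj(1) b] tuple2_comp[OF P fi(2) fj(2) \<alpha>] by (rule eq_iff)
  qed
  have other: "f' l = f l" "c' l = c l" if "l \<noteq> i" for l
    using that unfolding f'_def c'_def by simp_all
  have "kernel_solution X S K f' c' \<alpha> b \<longleftrightarrow> kernel_solution X S (insert j K) f c \<alpha> b" for \<alpha> b
  proof (cases "regular_epi C \<alpha> \<and> Cod C \<alpha> = S \<and> b \<in> hom C (Dom C \<alpha>) X")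
    case True
    then have "\<alpha> \<in> hom C (Dom C \<alpha>) S" "b \<in> hom C (Dom C \<alpha>) X"
      using regular_epi_arr by (auto simp: in_hom_iff)
    then have "(\<forall>l\<in>K. f' l \<cdot> b = c' l \<cdot> \<alpha>) \<longleftrightarrow> (\<forall>l\<in>insert j K. f l \<cdot> b = c l \<cdot> \<alpha>)"
      by (intro ball_merge_iff[OF i] merged) (simp_all add: other)
    then show ?thesis unfolding kernel_solution_def using True by simp
  qed (auto simp: kernel_solution_def)
  then show ?thesis unfolding kernel_solvable_def f'_def c'_def by blast
qed

lemma kernel_system_merge:
  assumes P: "is_product2 C (Cod C (f i)) (Cod C (f j)) q1 q2" and sys: "kernel_system X S I f c"
    and ij: "i \<in> I" "j \<in> I"
  shows "kernel_system X S I (f(i := tuple2 C q1 q2 (f i) (f j))) (c(i := tuple2 C q1 q2 (c i) (c j)))"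
proof -
  have "f i \<in> hom C X (Cod C (f i))" "c i \<in> hom C S (Cod C (f i))"
    "f j \<in> hom C X (Cod C (f j))" "c j \<in> hom C S (Cod C (f j))"
    using sys ij unfolding kernel_system_def by (auto simp: in_hom_iff)
  then have "tuple2 C q1 q2 (f i) (f j) \<in> hom C X (Dom C q1)" "tuple2 C q1 q2 (c i) (c j) \<in> hom C S (Dom C q1)"
    using tuple2_spec(1)[OF P] by simp_all
  then show ?thesis using sys unfolding kernel_system_def by (auto simp: in_hom_iff)
qed

lemma kernel_solvable_if_pairwise:
  assumes maj: "majority_category C"
  shows "finite I \<Longrightarrow> I \<noteq> {} \<Longrightarrow> kernel_system X S I f c \<Longrightarrow>
    (\<forall>i\<in>I. \<forall>j\<in>I. kernel_solvable X S {i, j} f c) \<Longrightarrow> kernel_solvable X S I f c"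
proof (induction "card I" arbitrary: I f c rule: less_induct)
  case less
  note fin = less.prems(1) and sys = less.prems(3) and pairwise = less.prems(4)
  show ?case
  proof (cases "\<exists>i\<in>I. \<exists>j\<in>I. i \<noteq> j")
    case False
    obtain i where "i \<in> I" using less.prems(2) by blast
    with False have "I = {i}" by blast
    then show ?thesis using pairwise by simp
  next
    case True
    then obtain i j where ij: "i \<in> I" "j \<in> I" "i \<noteq> j" by blast
    have "Cod C (f i) \<in> Obj C" "Cod C (f j) \<in> Obj C"
      using sys ij cod_in_Obj unfolding kernel_system_def by blast+
    then obtain q1 q2 where P: "is_product2 C (Cod C (f i)) (Cod C (f j)) q1 q2"
      by (rule product2_exists)
    define f' where "f' = f(i := tuple2 C q1 q2 (f i) (f j))"
    define c' where "c' = c(i := tuple2 C q1 q2 (c i) (c j))"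
    have merge: "kernel_solvable X S K f' c' \<longleftrightarrow> kernel_solvable X S (insert j K) f c" if "i \<in> K" for K
      unfolding f'_def c'_def
      by (rule kernel_solvable_merge[OF P kernel_system_mono[OF _ sys] that]) (use ij in simp)
    have sys': "kernel_system X S (I - {j}) f' c'"
      using kernel_system_mono[OF _ kernel_system_merge[OF P sys ij(1,2)]] unfolding f'_def c'_def by blast
    have "kernel_solvable X S {l, l'} f' c'" if l: "l \<in> I - {j}" "l' \<in> I - {j}" for l l'
    proof (cases "i \<in> {l, l'}")
      case True
      then obtain r where r: "r \<in> I" "{l, l'} = {i, r}" using l by blast
      have "kernel_solvable X S {i, j, r} f c"
        by (rule kernel_solvable_triple[OF maj]) (use sys pairwise ij r in \<open>auto intro: kernel_system_mono\<close>)
      then show ?thesis using merge[of "{l, l'}"] True r(2) by (simp add: insert_commute)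
    next
      case False
      then show ?thesis using pairwise l unfolding f'_def c'_def
        by (subst kernel_solvable_cong[of _ _ f _ c]) auto
    qed
    moreover have "card (I - {j}) < card I" using fin ij(2) by (rule card_Diff1_less)
    ultimately have "kernel_solvable X S (I - {j}) f' c'"
      using less.hyps[of "I - {j}" f' c'] fin ij sys' by blast
    then show ?thesis using merge[of "I - {j}"] ij by (simp add: insert_absorb)
  qed
qed
lemma ex_hom_iso_iff:
  assumes i: "iso C i" "i \<in> hom C A B"
  shows "(\<exists>s\<in>hom C Q B. P s) \<longleftrightarrow> (\<exists>s\<in>hom C Q A. P (i \<cdot> s))"
proof
  assume "\<exists>s\<in>hom C Q B. P s"
  then obtain s where s: "s \<in> hom C Q B" "P s" by blast
  have "\<exists>g\<in>hom C B A. i \<cdot> g = Id C B" using i unfolding iso_def in_hom_iff by auto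
  then obtain g where g: "g \<in> hom C B A" "i \<cdot> g = Id C B" by blast
  have a: "i \<in> Arr C" "g \<in> Arr C" "s \<in> Arr C" "Cod C s = B" "Dom C s = Q" "Dom C i = A" "Cod C i = B"
    "Dom C g = B" "Cod C g = A" using i(2) g(1) s(1) by (auto simp: in_hom_iff)
  have "i \<cdot> (g \<cdot> s) = (i \<cdot> g) \<cdot> s" using a by simp
  also have "\<dots> = s" using comp_Id_left[OF a(3)] a by (simp add: g(2))
  finally have "P (i \<cdot> (g \<cdot> s))" using s(2) by simp
  moreover have "g \<cdot> s \<in> hom C Q A" using a by (simp add: in_hom_iff)
  ultimately show "\<exists>s\<in>hom C Q A. P (i \<cdot> s)" by blast
next
  assume "\<exists>s\<in>hom C Q A. P (i \<cdot> s)"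
  then obtain s where "s \<in> hom C Q A" "P (i \<cdot> s)" by blast
  moreover from this(1) have "i \<cdot> s \<in> hom C Q B" using i(2) by (auto simp: in_hom_iff)
  ultimately show "\<exists>s\<in>hom C Q B. P s" by blast
qed

lemma gmem_tuple2_iff:
  assumes P: "is_product2 C X Y q1 q2" and r: "r \<in> Arr C" "Cod C r = Dom C q1"
    and u: "u \<in> hom C Q X" and v: "v \<in> hom C Q Y"
  shows "gmem C (tuple2 C q1 q2 u v) r \<longleftrightarrow> (\<exists>s\<in>hom C Q (Dom C r). q1 \<cdot> (r \<cdot> s) = u \<and> q2 \<cdot> (r \<cdot> s) = v)"
proof -
  note t = tuple2_spec[OF P u v] and p = is_product2D[OF P]
  have "r \<cdot> s = tuple2 C q1 q2 u v \<longleftrightarrow> q1 \<cdot> (r \<cdot> s) = u \<and> q2 \<cdot> (r \<cdot> s) = v"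
    if s: "s \<in> hom C Q (Dom C r)" for s
  proof
    show "r \<cdot> s = tuple2 C q1 q2 u v \<Longrightarrow> q1 \<cdot> (r \<cdot> s) = u \<and> q2 \<cdot> (r \<cdot> s) = v" using t by simp
    have "r \<cdot> s \<in> hom C Q (Dom C q1)" using r s by (auto simp: in_hom_iff)
    then show "q1 \<cdot> (r \<cdot> s) = u \<and> q2 \<cdot> (r \<cdot> s) = v \<Longrightarrow> r \<cdot> s = tuple2 C q1 q2 u v"
      using tuple2_unique[OF P u v] by simp
  qed
  moreover have "Dom C (tuple2 C q1 q2 u v) = Q" using t(1) by (simp add: in_hom_iff)
  ultimately show ?thesis unfolding gmem_def by auto
qed

lemma kernel_pair_iff:
  assumes kp: "kernel_pair C g p k" and u: "u \<in> hom C Q (Dom C g)" and v: "v \<in> hom C Q (Dom C g)"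
  shows "(\<exists>s\<in>hom C Q (Dom C p). p \<cdot> s = u \<and> k \<cdot> s = v) \<longleftrightarrow> g \<cdot> u = g \<cdot> v"
proof
  note pb = kp[unfolded kernel_pair_def] note K = is_pullbackD[OF pb]
  assume "\<exists>s\<in>hom C Q (Dom C p). p \<cdot> s = u \<and> k \<cdot> s = v"
  then obtain s where s: "s \<in> hom C Q (Dom C p)" and ps: "p \<cdot> s = u" and ks: "k \<cdot> s = v" by blast
  have sa: "s \<in> Arr C" "Cod C s = Dom C p" using s by (auto simp: in_hom_iff)
  have "g \<cdot> (p \<cdot> s) = g \<cdot> (k \<cdot> s)"
    by (rule comp_eq_whisker[OF K(9) K(1,3,2,4) sa(1)]) (use K(6-8) sa(2) in simp_all)
  then show "g \<cdot> u = g \<cdot> v" by (simp only: ps ks)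
next
  assume guv: "g \<cdot> u = g \<cdot> v"
  have a: "u \<in> Arr C" "v \<in> Arr C" "Dom C u = Dom C v" "Cod C u = Dom C g" "Cod C v = Dom C g" "Dom C u = Q"
    using u v by (auto simp: in_hom_iff)
  then show "\<exists>s\<in>hom C Q (Dom C p). p \<cdot> s = u \<and> k \<cdot> s = v"
    using pullback_universal[OF kp[unfolded kernel_pair_def] a(1-5) guv] by auto
qed

definition congr_kernel :: "'o \<Rightarrow> 'a \<times> 'a \<times> 'a \<Rightarrow> 'a \<Rightarrow> bool" where
  "congr_kernel X th g \<longleftrightarrow> g \<in> Arr C \<and> Dom C g = X \<and>
     (\<forall>Q u v. u \<in> hom C Q X \<and> v \<in> hom C Q X \<longrightarrow> (congr C th u v \<longleftrightarrow> g \<cdot> u = g \<cdot> v))"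

lemma effective_congr_kernel:
  assumes "equivalence_relation C X th" and "effective C X th"
  shows "\<exists>g. congr_kernel X th g"
proof -
  obtain q1 q2 t where th: "th = (q1, q2, t)" by (cases th) auto
  have P: "is_product2 C X X q1 q2" and t: "t \<in> Arr C" "Cod C t = Dom C q1"
    using assms(1) mono_arr unfolding th equivalence_relation_def by auto
  obtain g p k i where g: "Dom C g = X" and kp: "kernel_pair C g p k"
    and i: "iso C i" "i \<in> hom C (Dom C p) (Dom C t)" and pk: "q1 \<cdot> (t \<cdot> i) = p" "q2 \<cdot> (t \<cdot> i) = k"
    using assms(2) unfolding th effective_def by auto
  note K = is_pullbackD[OF kp[unfolded kernel_pair_def]]
  have ia: "i \<in> Arr C" "Dom C i = Dom C p" "Cod C i = Dom C t" using i(2) by (auto simp: in_hom_iff)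
  have congr_iff: "congr C th u v \<longleftrightarrow> g \<cdot> u = g \<cdot> v" if u: "u \<in> hom C Q X" and v: "v \<in> hom C Q X" for Q u v
  proof -
    have reassoc: "q \<cdot> (t \<cdot> (i \<cdot> s)) = (q \<cdot> (t \<cdot> i)) \<cdot> s"
      if "q \<in> Arr C" "Dom C q = Dom C q1" "s \<in> hom C Q (Dom C p)" for q s
      using that t ia by (auto simp: in_hom_iff)
    have "congr C th u v \<longleftrightarrow> (\<exists>s\<in>hom C Q (Dom C t). q1 \<cdot> (t \<cdot> s) = u \<and> q2 \<cdot> (t \<cdot> s) = v)"
      unfolding th congr_def using gmem_tuple2_iff[OF P t u v] by simp
    also have "\<dots> \<longleftrightarrow> (\<exists>s\<in>hom C Q (Dom C p). q1 \<cdot> (t \<cdot> (i \<cdot> s)) = u \<and> q2 \<cdot> (t \<cdot> (i \<cdot> s)) = v)"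
      by (rule ex_hom_iso_iff[OF i])
    also have "\<dots> \<longleftrightarrow> (\<exists>s\<in>hom C Q (Dom C p). p \<cdot> s = u \<and> k \<cdot> s = v)"
      using reassoc[of q1] reassoc[of q2] is_product2D[OF P] pk by (intro bex_cong) simp_all
    also have "\<dots> \<longleftrightarrow> g \<cdot> u = g \<cdot> v" using kernel_pair_iff[OF kp] u v g by simp
    finally show ?thesis .
  qed
  have "g \<in> Arr C" using K(1) .
  then show ?thesis using g congr_iff unfolding congr_kernel_def by blast
qed

lemma approx_solvable_iff_kernel_solvable:
  assumes "\<forall>i\<in>I. a i \<in> hom C S X \<and> congr_kernel X (th i) (g i)"
  shows "approx_solvable C X S I a th \<longleftrightarrow> kernel_solvable X S I g (\<lambda>i. g i \<cdot> a i)"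
proof -
  have congr_iff: "congr C (th i) b (a i \<cdot> \<alpha>) \<longleftrightarrow> g i \<cdot> b = (g i \<cdot> a i) \<cdot> \<alpha>"
    if i: "i \<in> I" and \<alpha>: "\<alpha> \<in> hom C Q S" and b: "b \<in> hom C Q X" for i Q \<alpha> b
  proof -
    have a: "a i \<in> Arr C" "Dom C (a i) = S" "Cod C (a i) = X" and g: "g i \<in> Arr C" "Dom C (g i) = X"
      and k: "\<And>Q u v. u \<in> hom C Q X \<Longrightarrow> v \<in> hom C Q X \<Longrightarrow> congr C (th i) u v \<longleftrightarrow> g i \<cdot> u = g i \<cdot> v"
      using assms i unfolding congr_kernel_def by (auto simp: in_hom_iff)
    have "a i \<cdot> \<alpha> \<in> hom C Q X" using a \<alpha> by (auto simp: in_hom_iff)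
    then show ?thesis using k[OF b] a g \<alpha> by (auto simp: in_hom_iff)
  qed
  show ?thesis
  proof
    assume "approx_solvable C X S I a th"
    then obtain Q \<alpha> b where \<alpha>: "regular_epi C \<alpha>" "\<alpha> \<in> hom C Q S" and b: "b \<in> hom C Q X"
      and eqs: "\<forall>i\<in>I. congr C (th i) b (a i \<cdot> \<alpha>)" unfolding approx_solvable_def by blast
    then have "kernel_solution X S I g (\<lambda>i. g i \<cdot> a i) \<alpha> b"
      unfolding kernel_solution_def using congr_iff[OF _ \<alpha>(2) b] by (auto simp: in_hom_iff)
    then show "kernel_solvable X S I g (\<lambda>i. g i \<cdot> a i)" unfolding kernel_solvable_def by blast
  next
    assume "kernel_solvable X S I g (\<lambda>i. g i \<cdot> a i)"
    then obtain \<alpha> b where \<alpha>: "regular_epi C \<alpha>" "Cod C \<alpha> = S" and b: "b \<in> hom C (Dom C \<alpha>) X"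
      and eqs: "\<forall>i\<in>I. g i \<cdot> b = (g i \<cdot> a i) \<cdot> \<alpha>"
      unfolding kernel_solvable_def kernel_solution_def by blast
    have \<alpha>': "\<alpha> \<in> hom C (Dom C \<alpha>) S" using \<alpha> regular_epi_arr by (simp add: in_hom_iff)
    then show "approx_solvable C X S I a th"
      unfolding approx_solvable_def using \<alpha>(1) b eqs congr_iff[OF _ \<alpha>' b] by blast
  qed
qed

end

theorem lemma5p7:
  fixes C :: "('o,'a) cat"
  assumes "regular_category C" and "majority_category C"
  shows "pairwise_CRT C"
proof -
  interpret regular_cat C by (rule regular_cat.intro) (rule assms(1))
  show ?thesis unfolding pairwise_CRT_def
  proof (intro ballI allI impI)
    fix X S m a th
    assume H: "1 \<le> m \<and> (\<forall>i<m. a i \<in> hom C S X \<and> equivalence_relation C X (th i) \<and> effective C X (th i)) \<and>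
      approx_pairwise_solvable C X S {..<m} a th"
    have "\<forall>i\<in>{..<m}. \<exists>g. congr_kernel X (th i) g" using H effective_congr_kernel by blast
    then obtain g where g: "\<forall>i\<in>{..<m}. a i \<in> hom C S X \<and> congr_kernel X (th i) (g i)"
      using H by (metis bchoice lessThan_iff)
    then have iff: "approx_solvable C X S J a th \<longleftrightarrow> kernel_solvable X S J g (\<lambda>i. g i \<cdot> a i)"
      if "J \<subseteq> {..<m}" for J using that by (intro approx_solvable_iff_kernel_solvable) blast
    have "kernel_system X S {..<m} g (\<lambda>i. g i \<cdot> a i)"
      using g unfolding kernel_system_def congr_kernel_def by (auto simp: in_hom_iff)
    moreover have "\<forall>i\<in>{..<m}. \<forall>j\<in>{..<m}. kernel_solvable X S {i, j} g (\<lambda>i. g i \<cdot> a i)"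
      using H iff unfolding approx_pairwise_solvable_def by simp
    moreover have "0 \<in> {..<m}" using H by simp
    ultimately have "kernel_solvable X S {..<m} g (\<lambda>i. g i \<cdot> a i)"
      using kernel_solvable_if_pairwise[OF assms(2) finite_lessThan] by (metis empty_iff)
    then show "approx_solvable C X S {..<m} a th" using iff by simp
  qed
qed

end
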